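(* Let $n\ge 2$ and let $P$ be a partition of $\{1,\dots,n+1\}$. There exists a convex $(n+1)$-dimensional polytope all of whose facets are regular simplices and whose boundary complex is isomorphic to ${\cal K}(P)$ if and only if $P$ has a single part (${\cal K}(P)$ is the boundary of the $(n+1)$-simplex), or all parts of $P$ are singletons (${\cal K}(P)$ is the boundary of the $(n+1)$-dimensional cross-polytope), or $P$ consists of one singleton and one part of size $n$ (${\cal K}(P)$ is the boundary of the bipyramid over an $n$-simplex).
   Context: For a partition $P=(P_1,\dots,P_t)$ of $\{1,\dots,n+1\}$, ${\cal K}(P)$ is the simplicial complex on the vertex set $\{1,\dots,n+1\}\cup\{p_1,\dots,p_t\}$ ($t$ new vertices) whose $n$-faces are the sets $\{y_1,\dots,y_{n+1}\}$ with, for each $i$, $y_i=i$ or $y_i=p_j$ where $i\in P_j$, subject to the $y_i$ being pairwise distinct; its faces are all nonempty subsets of these. The boundary complex of a simplicial polytope is the abstract simplicial complex whose faces are the vertex sets of its proper faces. *)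

theory Defs
  imports "HOL-Analysis.Analysis" "HOL-Library.Disjoint_Sets"
begin

text \<open>The complex K(P) for a partition P of {1..n+1}. Vertices: Inl i for i in {1..n+1},
  and Inr B for each block B of P (the new vertex p_j attached to block P_j = B).\<close>

definition KP_facets :: "nat \<Rightarrow> nat set set \<Rightarrow> (nat + nat set) set set" where
  "KP_facets n P = {F. \<exists>y. (\<forall>i\<in>{1..n+1}. y i = Inl i \<or> (\<exists>B\<in>P. i \<in> B \<and> y i = Inr B))
                          \<and> inj_on y {1..n+1} \<and> F = y ` {1..n+1}}"

definition KP :: "nat \<Rightarrow> nat set set \<Rightarrow> (nat + nat set) set set" where
  "KP n P = {S. S \<noteq> {} \<and> (\<exists>F\<in>KP_facets n P. S \<subseteq> F)}"

definition boundary_complex :: "'a::euclidean_space set \<Rightarrow> 'a set set" where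
  "boundary_complex Q = {{v. v extreme_point_of F} | F. F face_of Q \<and> F \<noteq> {} \<and> F \<noteq> Q}"

definition simplicial_iso :: "'a set set \<Rightarrow> 'b set set \<Rightarrow> bool" where
  "simplicial_iso K L \<longleftrightarrow> (\<exists>f. bij_betw f (\<Union>K) (\<Union>L) \<and> (\<forall>S. S \<subseteq> \<Union>K \<longrightarrow> (S \<in> K \<longleftrightarrow> f ` S \<in> L)))"

definition regular_simplex :: "'a::euclidean_space set \<Rightarrow> bool" where
  "regular_simplex S \<longleftrightarrow> (\<exists>V d. finite V \<and> \<not> affine_dependent V \<and> S = convex hull V
       \<and> (\<forall>x\<in>V. \<forall>y\<in>V. x \<noteq> y \<longrightarrow> dist x y = d))"

end

theory Submission
  imports Defs
begin

text \<open>
  The three partitions are realized, with all edges of length \<open>sqrt 2\<close>, by the (n+1)-simplex, the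
  cross-polytope and the bipyramid over a regular n-simplex. In each case the proper faces of the
  convex hull of the vertex set \<open>V\<close> are exactly the nonempty subsets of \<open>V\<close> containing none of the
  images of the minimal non-faces \<open>{p\<^sub>j} \<union> P\<^sub>j\<close> of \<open>K(P)\<close>, and every such subset is equilateral.

  Conversely, if all facets of \<open>Q\<close> are regular simplices, every face of \<open>K(P)\<close> is equilateral in \<open>Q\<close>,
  and since faces overlap in edges (this uses \<open>n \<ge> 2\<close>) all edges of \<open>K(P)\<close> have a common length
  \<open>d\<close>. The only pairs that are not edges are \<open>{i, p\<^sub>j}\<close> with \<open>P\<^sub>j = {i}\<close>. Two blocks with at least
  two elements give the \<open>n + 3\<close> points \<open>1, \<dots>, n + 1, p\<^sub>B, p\<^sub>C\<close> at mutual distance \<open>d\<close> in an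
  (n+1)-dimensional space; a block with at least two elements and two singleton blocks \<open>{a}, {b}\<close>
  give \<open>n + 4\<close> points at mutual distance \<open>d\<close> except for the pairs \<open>{a, p\<^sub>a}\<close> and \<open>{b, p\<^sub>b}\<close>. Both
  contradict the dimension: for an affine dependence \<open>c\<close> the sum \<open>\<Sum>\<^sub>y c\<^sub>y |x - y|\<^sup>2\<close> does not depend
  on \<open>x\<close>, which forces the coefficients of such nearly equilateral sets to vanish. Every other
  partition has one of the three listed shapes.
\<close>

section \<open>Equilateral sets and affine dependence\<close>

definition equilateral :: "'a::metric_space set \<Rightarrow> real \<Rightarrow> bool" where
  "equilateral S d \<longleftrightarrow> (\<forall>x\<in>S. \<forall>y\<in>S. x \<noteq> y \<longrightarrow> dist x y = d)"

lemma equilateral_subset: "equilateral S d \<Longrightarrow> T \<subseteq> S \<Longrightarrow> equilateral T d"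
  by (auto simp: equilateral_def)

lemma affine_dependence_sum_dist_sq:
  fixes T :: "'a::real_inner set"
  assumes "finite T" "sum c T = 0" "(\<Sum>y\<in>T. c y *\<^sub>R y) = 0"
  shows "(\<Sum>y\<in>T. c y * (dist x y)\<^sup>2) = (\<Sum>y\<in>T. c y * (norm y)\<^sup>2)"
proof -
  have expand: "(dist x y)\<^sup>2 = (norm x)\<^sup>2 - 2 * (x \<bullet> y) + (norm y)\<^sup>2" for y
    by (simp add: dist_norm power2_norm_eq_inner inner_diff_left inner_diff_right inner_commute)
  have "(\<Sum>y\<in>T. c y * (dist x y)\<^sup>2)
      = (norm x)\<^sup>2 * sum c T - 2 * (x \<bullet> (\<Sum>y\<in>T. c y *\<^sub>R y)) + (\<Sum>y\<in>T. c y * (norm y)\<^sup>2)"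
    by (simp add: expand algebra_simps sum.distrib sum_subtractf sum_distrib_left
        sum_distrib_right inner_sum_right)
  then show ?thesis
    using assms by simp
qed

lemma sum_dist_sq_equidistant_point:
  assumes "finite T" "x \<in> T" "\<And>y. y \<in> T - {x} \<Longrightarrow> dist x y = d"
  shows "(\<Sum>y\<in>T. c y * (dist x y)\<^sup>2) = d\<^sup>2 * (sum c T - c x)"
proof -
  have "(\<Sum>y\<in>T. c y * (dist x y)\<^sup>2) = (\<Sum>y\<in>T - {x}. c y * (dist x y)\<^sup>2)"
    using assms by (simp add: sum.remove)
  also have "\<dots> = (\<Sum>y\<in>T - {x}. d\<^sup>2 * c y)"
    using assms(3) by (intro sum.cong) auto
  finally show ?thesis
    using assms by (simp add: sum_distrib_left[symmetric] sum_diff1)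
qed

lemma sum_dist_sq_one_exception:
  assumes "finite T" "x \<in> T" "z \<in> T" "x \<noteq> z" "\<And>y. y \<in> T - {x, z} \<Longrightarrow> dist x y = d"
  shows "(\<Sum>y\<in>T. c y * (dist x y)\<^sup>2) = d\<^sup>2 * (sum c T - c x - c z) + (dist x z)\<^sup>2 * c z"
proof -
  have "(\<Sum>y\<in>T. c y * (dist x y)\<^sup>2) = (dist x z)\<^sup>2 * c z + (\<Sum>y\<in>T - {x, z}. c y * (dist x y)\<^sup>2)"
    using assms by (simp add: sum.remove[of T x] sum.remove[of "T - {x}" z] Diff_insert2[symmetric])
  also have "(\<Sum>y\<in>T - {x, z}. c y * (dist x y)\<^sup>2) = (\<Sum>y\<in>T - {x, z}. d\<^sup>2 * c y)"
    using assms(5) by (intro sum.cong) auto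
  also have "\<dots> = d\<^sup>2 * (sum c T - c x - c z)"
    using assms by (simp add: sum_distrib_left[symmetric] sum_diff sum.insert_remove)
  finally show ?thesis
    by simp
qed

lemma affine_dependence_coeff_equidistant_point:
  fixes T :: "'a::real_inner set"
  assumes "finite T" "sum c T = 0" "(\<Sum>y\<in>T. c y *\<^sub>R y) = 0" "d \<noteq> 0"
    and "x \<in> T" "\<And>y. y \<in> T - {x} \<Longrightarrow> dist x y = d"
  shows "c x = - (\<Sum>y\<in>T. c y * (norm y)\<^sup>2) / d\<^sup>2"
  using sum_dist_sq_equidistant_point[OF assms(1,5,6), of c]
    affine_dependence_sum_dist_sq[OF assms(1-3), of x] assms(2,4)
  by (simp add: field_simps)

lemma affine_dependence_coeffs_exceptional_pair:
  fixes T :: "'a::real_inner set"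
  assumes "finite T" "sum c T = 0" "(\<Sum>y\<in>T. c y *\<^sub>R y) = 0"
    and "u \<in> T" "q \<in> T" "u \<noteq> q" "\<And>y. y \<in> T - {u, q} \<Longrightarrow> dist u y = d \<and> dist q y = d"
  shows "c q = c u" and "(\<Sum>y\<in>T. c y * (norm y)\<^sup>2) = c u * ((dist u q)\<^sup>2 - 2 * d\<^sup>2)"
proof -
  let ?\<kappa> = "\<Sum>y\<in>T. c y * (norm y)\<^sup>2"
  have at_u: "?\<kappa> = d\<^sup>2 * (- c u - c q) + (dist u q)\<^sup>2 * c q"
    using sum_dist_sq_one_exception[OF assms(1,4,5,6), of d c] assms(7)
      affine_dependence_sum_dist_sq[OF assms(1-3), of u] assms(2) by simp
  have at_q: "?\<kappa> = d\<^sup>2 * (- c u - c q) + (dist u q)\<^sup>2 * c u"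
    using sum_dist_sq_one_exception[OF assms(1,5,4) assms(6)[symmetric], of d c] assms(7)
      affine_dependence_sum_dist_sq[OF assms(1-3), of q] assms(2)
    by (simp add: dist_commute insert_commute algebra_simps)
  show "c q = c u"
    using at_u at_q assms(6) by simp
  then show "?\<kappa> = c u * ((dist u q)\<^sup>2 - 2 * d\<^sup>2)"
    using at_u by (simp add: algebra_simps)
qed

lemma equilateral_imp_affine_independent:
  fixes S :: "'a::real_inner set"
  assumes "finite S" "equilateral S d"
  shows "\<not> affine_dependent S"
proof
  assume "affine_dependent S"
  then obtain c where c: "sum c S = 0" "(\<Sum>v\<in>S. c v *\<^sub>R v) = 0" and "\<exists>v\<in>S. c v \<noteq> 0"
    using affine_dependent_explicit_finite[OF assms(1)] by blast
  then obtain v where v: "v \<in> S" "c v \<noteq> 0"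
    by blast
  show False
  proof (cases "d = 0")
    case True
    then have "S = {v}"
      using assms(2) v(1) by (force simp: equilateral_def)
    then show False
      using c v by simp
  next
    case False
    define \<kappa> where "\<kappa> = (\<Sum>y\<in>S. c y * (norm y)\<^sup>2)"
    have coeff: "c x = - \<kappa> / d\<^sup>2" if "x \<in> S" for x
      unfolding \<kappa>_def using assms(2) that
      by (intro affine_dependence_coeff_equidistant_point[OF assms(1) c False]) (auto simp: equilateral_def)
    then have "real (card S) * (- \<kappa> / d\<^sup>2) = 0"
      using c(1) by simp
    moreover have "card S > 0"
      using v(1) assms(1) card_gt_0_iff by blast
    ultimately show False
      using coeff[OF v(1)] v(2) by simp
  qed
qed

lemma affine_independent_card_le:
  fixes S :: "'a::euclidean_space set"
  shows "\<not> affine_dependent S \<Longrightarrow> card S \<le> DIM('a) + 1"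
  using independent_card_le_aff_dim[of S UNIV] by simp

lemma equilateral_card_le:
  fixes S :: "'a::euclidean_space set"
  shows "finite S \<Longrightarrow> equilateral S d \<Longrightarrow> card S \<le> DIM('a) + 1"
  by (intro affine_independent_card_le equilateral_imp_affine_independent)

lemma affine_dependent_exceptional_pair_dist:
  fixes T :: "'a::real_inner set"
  assumes "finite T" "u \<in> T" "q \<in> T" "u \<noteq> q" "d \<noteq> 0"
    and equal: "\<And>x y. x \<in> T \<Longrightarrow> y \<in> T \<Longrightarrow> x \<noteq> y \<Longrightarrow> {x, y} \<noteq> {u, q} \<Longrightarrow> dist x y = d"
    and "affine_dependent T"
  shows "(dist u q)\<^sup>2 * (real (card T) - 2) = 2 * d\<^sup>2 * (real (card T) - 1)"
proof -
  obtain c where c: "sum c T = 0" "(\<Sum>v\<in>T. c v *\<^sub>R v) = 0" and nonzero: "\<exists>v\<in>T. c v \<noteq> 0"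
    using affine_dependent_explicit_finite[OF assms(1)] assms(7) by blast
  define \<kappa> where "\<kappa> = (\<Sum>y\<in>T. c y * (norm y)\<^sup>2)"
  define m where "m = real (card T)"
  have coeff: "c x = - \<kappa> / d\<^sup>2" if "x \<in> T - {u, q}" for x
    unfolding \<kappa>_def using that
    by (intro affine_dependence_coeff_equidistant_point[OF assms(1) c assms(5)] equal)
      (auto simp: doubleton_eq_iff)
  have "dist u y = d \<and> dist q y = d" if "y \<in> T - {u, q}" for y
    using that assms(2,3) by (auto intro: equal simp: doubleton_eq_iff)
  note pair = affine_dependence_coeffs_exceptional_pair[OF assms(1) c assms(2-4) this, folded \<kappa>_def]
  have "sum c T = c u + c q + sum c (T - {u, q})"
    using assms(1-4) by (simp add: sum.remove[of T u] sum.remove[of "T - {u}" q] Diff_insert2[symmetric])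
  also have "sum c (T - {u, q}) = (m - 2) * (- \<kappa> / d\<^sup>2)"
    using coeff assms(1-4) card_mono[OF assms(1), of "{u, q}"] by (simp add: m_def card_Diff_subset of_nat_diff)
  finally have "(m - 2) * \<kappa> = c u * (2 * d\<^sup>2)"
    using c(1) pair(1) assms(5) by (simp add: field_simps)
  moreover have "(m - 2) * \<kappa> = c u * ((m - 2) * ((dist u q)\<^sup>2 - 2 * d\<^sup>2))"
    using pair(2) by simp
  ultimately have "c u * ((m - 2) * ((dist u q)\<^sup>2 - 2 * d\<^sup>2)) = c u * (2 * d\<^sup>2)"
    by simp
  moreover have "c u \<noteq> 0"
  proof
    assume "c u = 0"
    then have "c v = 0" if "v \<in> T" for v
      using coeff[of v] pair that by (cases "v \<in> {u, q}") auto
    then show False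
      using nonzero by blast
  qed
  ultimately have "(m - 2) * ((dist u q)\<^sup>2 - 2 * d\<^sup>2) = 2 * d\<^sup>2"
    by simp
  then show ?thesis
    by (simp add: m_def algebra_simps)
qed

lemma affine_independent_two_exceptional_pairs:
  fixes T :: "'a::real_inner set"
  assumes "finite T" "u1 \<in> T" "q1 \<in> T" "u2 \<in> T" "q2 \<in> T" "distinct [u1, q1, u2, q2]" "d \<noteq> 0"
    and equal: "\<And>x y. x \<in> T \<Longrightarrow> y \<in> T \<Longrightarrow> x \<noteq> y \<Longrightarrow> {x, y} \<noteq> {u1, q1} \<Longrightarrow> {x, y} \<noteq> {u2, q2}
      \<Longrightarrow> dist x y = d"
    and D1: "(dist u1 q1)\<^sup>2 * (real (card T) - 3) = 2 * d\<^sup>2 * (real (card T) - 2)"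
    and D2: "(dist u2 q2)\<^sup>2 * (real (card T) - 3) = 2 * d\<^sup>2 * (real (card T) - 2)"
  shows "\<not> affine_dependent T"
proof
  assume "affine_dependent T"
  then obtain c where c: "sum c T = 0" "(\<Sum>v\<in>T. c v *\<^sub>R v) = 0" and nonzero: "\<exists>v\<in>T. c v \<noteq> 0"
    using affine_dependent_explicit_finite[OF assms(1)] by blast
  define \<kappa> where "\<kappa> = (\<Sum>y\<in>T. c y * (norm y)\<^sup>2)"
  define m where "m = real (card T)"
  define E where "E = {u1, q1, u2, q2}"
  have E: "E \<subseteq> T" "card E = 4"
    using assms(2-6) by (simp_all add: E_def)
  have coeff: "c x = - \<kappa> / d\<^sup>2" if x: "x \<in> T" "x \<notin> E" for x
  proof (rule affine_dependence_coeff_equidistant_point[OF assms(1) c assms(7) x(1), folded \<kappa>_def])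
    fix y
    assume "y \<in> T - {x}"
    moreover have "{x, y} \<noteq> {u1, q1}" "{x, y} \<noteq> {u2, q2}"
      using x(2) by (auto simp: E_def)
    ultimately show "dist x y = d"
      using x(1) equal by blast
  qed
  have "dist u1 y = d \<and> dist q1 y = d" if "y \<in> T - {u1, q1}" for y
    using that assms(2,3,6) equal[of u1 y] equal[of q1 y] by (auto simp: doubleton_eq_iff)
  note pair1 = affine_dependence_coeffs_exceptional_pair[OF assms(1) c assms(2,3) _ this, folded \<kappa>_def]
  have "dist u2 y = d \<and> dist q2 y = d" if "y \<in> T - {u2, q2}" for y
    using that assms(4,5,6) equal[of u2 y] equal[of q2 y] by (auto simp: doubleton_eq_iff)
  note pair2 = affine_dependence_coeffs_exceptional_pair[OF assms(1) c assms(4,5) _ this, folded \<kappa>_def]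
  have q: "c q1 = c u1" "c q2 = c u2"
    using pair1(1) pair2(1) assms(6) by auto
  have m: "m \<ge> 4"
    using card_mono[OF assms(1) E(1)] E(2) by (simp add: m_def)
  have "((dist u1 q1)\<^sup>2 - 2 * d\<^sup>2) * (m - 3) = 2 * d\<^sup>2"
    using D1 by (simp add: m_def algebra_simps)
  then have \<kappa>1: "\<kappa> * (m - 3) = c u1 * (2 * d\<^sup>2)"
    using pair1(2) assms(6) by (simp add: mult.assoc)
  have "((dist u2 q2)\<^sup>2 - 2 * d\<^sup>2) * (m - 3) = 2 * d\<^sup>2"
    using D2 by (simp add: m_def algebra_simps)
  then have "\<kappa> * (m - 3) = c u2 * (2 * d\<^sup>2)"
    using pair2(2) assms(6) by (simp add: mult.assoc)
  then have u: "c u2 = c u1"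
    using \<kappa>1 assms(7) by simp
  have "sum c T = sum c E + sum c (T - E)"
    using assms(1) E(1) by (simp add: sum.subset_diff)
  also have "sum c E = 2 * c u1 + 2 * c u2"
    using assms(6) q by (simp add: E_def)
  also have "sum c (T - E) = (m - 4) * (- \<kappa> / d\<^sup>2)"
    using coeff assms(1) E card_mono[OF assms(1) E(1)]
    by (simp add: m_def card_Diff_subset finite_subset of_nat_diff)
  finally have "(m - 4) * \<kappa> * (m - 3) = 4 * c u1 * d\<^sup>2 * (m - 3)"
    using c(1) u assms(7) by (simp add: field_simps)
  then have "(m - 4) * (c u1 * (2 * d\<^sup>2)) = 4 * c u1 * d\<^sup>2 * (m - 3)"
    using \<kappa>1 by (simp add: mult.assoc)
  then have "c u1 * (2 * d\<^sup>2) * (m - 2) = 0"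
    by (simp add: algebra_simps)
  then have "c u1 = 0"
    using assms(7) m by simp
  then have "c v = 0" if "v \<in> T" for v
    using coeff[of v] pair1(2) q u that assms(6) by (cases "v \<in> E") (auto simp: E_def)
  then show False
    using nonzero by blast
qed

text \<open>Removing \<open>q2\<close> (or \<open>q1\<close>) leaves an affinely dependent set with a single exceptional pair,
  which determines both exceptional distances; with these the whole set is affinely independent.\<close>

lemma two_exceptional_pairs_card_le:
  fixes T :: "'a::euclidean_space set"
  assumes "finite T" "u1 \<in> T" "q1 \<in> T" "u2 \<in> T" "q2 \<in> T" "distinct [u1, q1, u2, q2]" "d \<noteq> 0"
    and equal: "\<And>x y. x \<in> T \<Longrightarrow> y \<in> T \<Longrightarrow> x \<noteq> y \<Longrightarrow> {x, y} \<noteq> {u1, q1} \<Longrightarrow> {x, y} \<noteq> {u2, q2}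
      \<Longrightarrow> dist x y = d"
  shows "card T \<le> DIM('a) + 2"
proof (rule ccontr)
  assume "\<not> ?thesis"
  then have large: "card T - 1 > DIM('a) + 1"
    by simp
  have card_remove: "card (T - {x}) = card T - 1" if "x \<in> T" for x
    using assms(1) that by simp
  have "(dist u1 q1)\<^sup>2 * (real (card (T - {q2})) - 2) = 2 * d\<^sup>2 * (real (card (T - {q2})) - 1)"
  proof (rule affine_dependent_exceptional_pair_dist)
    show "affine_dependent (T - {q2})"
      using affine_independent_card_le[of "T - {q2}"] large card_remove[OF assms(5)] by linarith
    fix x y
    assume "x \<in> T - {q2}" "y \<in> T - {q2}" "x \<noteq> y" "{x, y} \<noteq> {u1, q1}"
    then show "dist x y = d"
      using equal[of x y] by (auto simp: doubleton_eq_iff)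
  qed (use assms(1-7) in auto)
  then have D1: "(dist u1 q1)\<^sup>2 * (real (card T) - 3) = 2 * d\<^sup>2 * (real (card T) - 2)"
    using card_remove[OF assms(5)] large by (simp add: of_nat_diff algebra_simps)
  have "(dist u2 q2)\<^sup>2 * (real (card (T - {q1})) - 2) = 2 * d\<^sup>2 * (real (card (T - {q1})) - 1)"
  proof (rule affine_dependent_exceptional_pair_dist)
    show "affine_dependent (T - {q1})"
      using affine_independent_card_le[of "T - {q1}"] large card_remove[OF assms(3)] by linarith
    fix x y
    assume "x \<in> T - {q1}" "y \<in> T - {q1}" "x \<noteq> y" "{x, y} \<noteq> {u2, q2}"
    then show "dist x y = d"
      using equal[of x y] by (auto simp: doubleton_eq_iff)
  qed (use assms(1-7) in auto)
  then have D2: "(dist u2 q2)\<^sup>2 * (real (card T) - 3) = 2 * d\<^sup>2 * (real (card T) - 2)"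
    using card_remove[OF assms(3)] large by (simp add: of_nat_diff algebra_simps)
  have "\<not> affine_dependent T"
    by (rule affine_independent_two_exceptional_pairs[OF assms D1 D2])
  then show False
    using affine_independent_card_le[of T] large by linarith
qed

section \<open>Vertex sets cut out by supporting hyperplanes\<close>

text \<open>\<open>W = V\<close> and \<open>W = {}\<close> are exposed subsets of \<open>V\<close> as well.\<close>

definition exposed_subset :: "'a::euclidean_space set \<Rightarrow> 'a set \<Rightarrow> bool" where
  "exposed_subset V W \<longleftrightarrow> (\<exists>a b. (\<forall>v\<in>V. a \<bullet> v \<le> b) \<and> W = {v\<in>V. a \<bullet> v = b})"

lemma exposed_subset_imp_subset: "exposed_subset V W \<Longrightarrow> W \<subseteq> V"
  by (auto simp: exposed_subset_def)

lemma convex_hull_supporting_face: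
  fixes V :: "'a::euclidean_space set"
  assumes "\<forall>v\<in>V. a \<bullet> v \<le> b"
  shows "convex hull V \<inter> {x. a \<bullet> x = b} face_of convex hull V"
proof (rule face_of_Int_supporting_hyperplane_le)
  have "convex hull V \<subseteq> {x. a \<bullet> x \<le> b}"
    using assms by (intro hull_minimal) (auto simp: convex_halfspace_le)
  then show "\<And>x. x \<in> convex hull V \<Longrightarrow> a \<bullet> x \<le> b"
    by blast
qed simp

lemma extreme_points_supporting_face:
  fixes V :: "'a::euclidean_space set"
  assumes "\<forall>v\<in>V. a \<bullet> v \<le> b"
  shows "{x. x extreme_point_of (convex hull V \<inter> {x. a \<bullet> x = b})}
    = {v\<in>V. a \<bullet> v = b \<and> v extreme_point_of convex hull V}"
proof -
  note face = convex_hull_supporting_face[OF assms]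
  show ?thesis
  proof (intro set_eqI iffI CollectI conjI)
    fix x
    assume "x \<in> {x. x extreme_point_of (convex hull V \<inter> {x. a \<bullet> x = b})}"
    then have x: "x extreme_point_of convex hull V" "x \<in> convex hull V \<inter> {x. a \<bullet> x = b}"
      using extreme_point_of_face[OF face] by auto
    then show "x \<in> V" "a \<bullet> x = b" "x extreme_point_of convex hull V"
      using extreme_point_of_convex_hull by auto
  next
    fix x
    assume "x \<in> {v \<in> V. a \<bullet> v = b \<and> v extreme_point_of convex hull V}"
    then show "x extreme_point_of (convex hull V \<inter> {x. a \<bullet> x = b})"
      using extreme_point_of_face[OF face] hull_subset[of V convex] by auto
  qed
qed

lemma extreme_point_exists:
  fixes S :: "'a::euclidean_space set"
  assumes "compact S" "convex S" "S \<noteq> {}"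
  obtains x where "x extreme_point_of S"
proof -
  have "{x. x extreme_point_of S} \<noteq> {}"
    using Krein_Milman_Minkowski[OF assms(1,2)] assms(3) by auto
  then show ?thesis
    using that by blast
qed

lemma extreme_points_convex_hull_exposed:
  fixes V :: "'a::euclidean_space set"
  assumes "finite V" and vertex: "\<And>v. v \<in> V \<Longrightarrow> exposed_subset V {v}"
  shows "{v. v extreme_point_of convex hull V} = V"
proof
  show "{v. v extreme_point_of convex hull V} \<subseteq> V"
    by (rule extreme_points_of_convex_hull)
  show "V \<subseteq> {v. v extreme_point_of convex hull V}"
  proof
    fix v
    assume "v \<in> V"
    then obtain a b where ab: "\<forall>w\<in>V. a \<bullet> w \<le> b" "{v} = {w\<in>V. a \<bullet> w = b}"
      using vertex unfolding exposed_subset_def by blast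
    have on: "a \<bullet> v = b" and unique: "\<And>w. w \<in> V \<Longrightarrow> a \<bullet> w = b \<Longrightarrow> w = v"
      using ab(2) by blast+
    let ?F = "convex hull V \<inter> {x. a \<bullet> x = b}"
    have face: "?F face_of convex hull V"
      by (rule convex_hull_supporting_face[OF ab(1)])
    have "?F \<noteq> {}"
      using on \<open>v \<in> V\<close> hull_subset[of V convex] by blast
    moreover have "compact ?F"
      using assms(1) by (intro face_of_imp_compact[OF convex_convex_hull _ face])
        (simp add: compact_convex_hull finite_imp_compact)
    ultimately obtain u where "u extreme_point_of ?F"
      using extreme_point_exists[OF _ face_of_imp_convex[OF face]] by blast
    then have "u \<in> V" "a \<bullet> u = b" "u extreme_point_of convex hull V"
      using extreme_points_supporting_face[OF ab(1)] by blast+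
    then show "v \<in> {v. v extreme_point_of convex hull V}"
      using unique by auto
  qed
qed

lemma boundary_complex_convex_hull_imp_exposed:
  fixes V :: "'a::euclidean_space set"
  assumes "finite V" and ext: "{v. v extreme_point_of convex hull V} = V"
    and "W \<in> boundary_complex (convex hull V)"
  shows "W \<noteq> {} \<and> W \<noteq> V \<and> exposed_subset V W"
proof -
  let ?Q = "convex hull V"
  obtain F where W: "W = {v. v extreme_point_of F}" and F: "F face_of ?Q" "F \<noteq> {}" "F \<noteq> ?Q"
    using assms(3) unfolding boundary_complex_def by blast
  have "polyhedron ?Q"
    using assms(1) by (intro polytope_imp_polyhedron) (auto simp: polytope_def)
  then have "F exposed_face_of ?Q"
    using exposed_face_of_polyhedron F(1) by blast
  then obtain a b where ab: "?Q \<subseteq> {x. a \<bullet> x \<le> b}" "F = ?Q \<inter> {x. a \<bullet> x = b}"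
    unfolding exposed_face_of_def by blast
  have le: "\<forall>v\<in>V. a \<bullet> v \<le> b"
    using ab(1) hull_subset[of V convex] by blast
  have W_eq: "W = {v\<in>V. a \<bullet> v = b}"
    using W ab(2) extreme_points_supporting_face[OF le] ext by blast
  have "compact ?Q"
    using assms(1) by (simp add: compact_convex_hull finite_imp_compact)
  then obtain x where "x extreme_point_of F"
    using extreme_point_exists[OF face_of_imp_compact[OF convex_convex_hull _ F(1)] face_of_imp_convex[OF F(1)] F(2)]
    by blast
  then have "W \<noteq> {}"
    using W by blast
  moreover have "W \<noteq> V"
  proof
    assume "W = V"
    then have "V \<subseteq> F"
      using W_eq ab(2) hull_subset[of V convex] by auto
    then have "?Q \<subseteq> F"
      using face_of_imp_convex[OF F(1)] by (simp add: hull_minimal)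
    then show False
      using F(3) face_of_imp_subset[OF F(1)] by blast
  qed
  ultimately show ?thesis
    using le W_eq unfolding exposed_subset_def by blast
qed

lemma exposed_imp_boundary_complex_convex_hull:
  fixes V :: "'a::euclidean_space set"
  assumes ext: "{v. v extreme_point_of convex hull V} = V"
    and W: "W \<noteq> {}" "W \<noteq> V" "exposed_subset V W"
  shows "W \<in> boundary_complex (convex hull V)"
proof -
  let ?Q = "convex hull V"
  obtain a b where ab: "\<forall>v\<in>V. a \<bullet> v \<le> b" "W = {v\<in>V. a \<bullet> v = b}"
    using W(3) unfolding exposed_subset_def by blast
  let ?F = "?Q \<inter> {x. a \<bullet> x = b}"
  obtain w v where "w \<in> W" "v \<in> V" "v \<notin> W"
    using W(1,2) ab(2) by blast
  then have "w \<in> ?F" "v \<in> ?Q - ?F"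
    using ab(2) hull_subset[of V convex] by auto
  then have "?F \<noteq> {}" "?F \<noteq> ?Q"
    by blast+
  moreover have "W = {x. x extreme_point_of ?F}"
    using extreme_points_supporting_face[OF ab(1)] ext ab(2) by blast
  ultimately show ?thesis
    unfolding boundary_complex_def using convex_hull_supporting_face[OF ab(1)] by blast
qed

lemma boundary_complex_convex_hull:
  fixes V :: "'a::euclidean_space set"
  assumes "finite V" and "\<And>v. v \<in> V \<Longrightarrow> exposed_subset V {v}"
  shows "boundary_complex (convex hull V) = {W. W \<noteq> {} \<and> W \<noteq> V \<and> exposed_subset V W}"
  using boundary_complex_convex_hull_imp_exposed[OF assms(1) extreme_points_convex_hull_exposed[OF assms]]
    exposed_imp_boundary_complex_convex_hull[OF extreme_points_convex_hull_exposed[OF assms]]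
  by blast

lemma facets_regular_simplex_iff_boundary_equilateral:
  fixes Q :: "'a::euclidean_space set"
  assumes "polytope Q"
  shows "(\<forall>F. F facet_of Q \<longrightarrow> regular_simplex F) \<longleftrightarrow> (\<forall>W\<in>boundary_complex Q. \<exists>d. equilateral W d)"
proof (intro iffI ballI allI impI)
  fix W
  assume regular: "\<forall>F. F facet_of Q \<longrightarrow> regular_simplex F" and "W \<in> boundary_complex Q"
  then obtain F where W: "W = {v. v extreme_point_of F}" and F: "F face_of Q" "F \<noteq> {}" "F \<noteq> Q"
    unfolding boundary_complex_def by blast
  obtain G where G: "G facet_of Q" "F \<subseteq> G"
    using face_of_polyhedron_subset_facet[OF polytope_imp_polyhedron[OF assms] F] by blast
  obtain V d where V: "G = convex hull V" "equilateral V d"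
    using regular G(1) unfolding regular_simplex_def equilateral_def by blast
  have face: "F face_of G"
    using face_of_subset[OF F(1) G(2) facet_of_imp_subset[OF G(1)]] .
  have "W \<subseteq> V"
  proof
    fix v
    assume "v \<in> W"
    then have "v extreme_point_of G"
      using W extreme_point_of_face[OF face] by blast
    then show "v \<in> V"
      using V(1) extreme_point_of_convex_hull by blast
  qed
  then show "\<exists>d. equilateral W d"
    using V(2) equilateral_subset by blast
next
  fix F
  assume equilateral: "\<forall>W\<in>boundary_complex Q. \<exists>d. equilateral W d" and "F facet_of Q"
  then have F: "F face_of Q" "F \<noteq> {}" "F \<noteq> Q"
    by (auto simp: facet_of_def)
  define W where "W = {v. v extreme_point_of F}"
  have "W \<in> boundary_complex Q"
    unfolding boundary_complex_def W_def using F by blast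
  then obtain d where d: "equilateral W d"
    using equilateral by blast
  have "W \<subseteq> {v. v extreme_point_of Q}"
    unfolding W_def using extreme_point_of_face[OF F(1)] by blast
  then have finite: "finite W"
    using finite_polyhedron_extreme_points[OF polytope_imp_polyhedron[OF assms]] by (rule finite_subset)
  have "F = convex hull W"
    unfolding W_def using polytope_imp_compact[OF assms] polytope_imp_convex[OF assms]
    by (intro Krein_Milman_Minkowski face_of_imp_compact[OF _ _ F(1)] face_of_imp_convex[OF F(1)])
  then show "regular_simplex F"
    unfolding regular_simplex_def
    using finite d equilateral_imp_affine_independent[OF finite d] unfolding equilateral_def by blast
qed

section \<open>Complexes with prescribed missing faces\<close>

definition missing_face_complex :: "'a set \<Rightarrow> 'a set set \<Rightarrow> 'a set set" where
  "missing_face_complex V \<M> = {W. W \<noteq> {} \<and> W \<subseteq> V \<and> (\<forall>M\<in>\<M>. \<not> M \<subseteq> W)}"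

lemma Union_missing_face_complex:
  assumes "\<And>M v. M \<in> \<M> \<Longrightarrow> \<not> M \<subseteq> {v}"
  shows "\<Union>(missing_face_complex V \<M>) = V"
proof
  show "V \<subseteq> \<Union>(missing_face_complex V \<M>)"
  proof
    fix v
    assume "v \<in> V"
    then have "{v} \<in> missing_face_complex V \<M>"
      using assms by (simp add: missing_face_complex_def)
    then show "v \<in> \<Union>(missing_face_complex V \<M>)"
      by blast
  qed
qed (auto simp: missing_face_complex_def)

lemma simplicial_iso_sym:
  assumes "simplicial_iso K L"
  shows "simplicial_iso L K"
proof -
  obtain f where f: "bij_betw f (\<Union>K) (\<Union>L)" and faces: "\<And>S. S \<subseteq> \<Union>K \<Longrightarrow> S \<in> K \<longleftrightarrow> f ` S \<in> L"
    using assms unfolding simplicial_iso_def by blast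
  define g where "g = inv_into (\<Union>K) f"
  have g: "bij_betw g (\<Union>L) (\<Union>K)"
    unfolding g_def by (rule bij_betw_inv_into[OF f])
  have fg: "f (g x) = x" if "x \<in> \<Union>L" for x
    using that f unfolding g_def by (simp add: bij_betw_def f_inv_into_f)
  have "T \<in> L \<longleftrightarrow> g ` T \<in> K" if "T \<subseteq> \<Union>L" for T
  proof -
    have "g ` T \<subseteq> \<Union>K"
      using g that bij_betw_imp_surj_on by blast
    moreover have "f ` g ` T = T"
      unfolding image_image using fg that by (simp add: subset_iff)
    ultimately show ?thesis
      using faces by metis
  qed
  then show ?thesis
    unfolding simplicial_iso_def using g by blast
qed

lemma simplicial_iso_missing_face_complex:
  assumes f: "bij_betw f V L" and sub: "\<And>M. M \<in> \<M> \<Longrightarrow> M \<subseteq> V"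
    and nonsingular: "\<And>M v. M \<in> \<M> \<Longrightarrow> \<not> M \<subseteq> {v}"
  shows "simplicial_iso (missing_face_complex V \<M>) (missing_face_complex L ((`) f ` \<M>))"
proof -
  have inj: "inj_on f V"
    using f by (rule bij_betw_imp_inj_on)
  have "\<not> f ` M \<subseteq> {w}" if M: "M \<in> \<M>" for M w
  proof
    assume "f ` M \<subseteq> {w}"
    obtain m where "m \<in> M"
      using nonsingular[OF M] by blast
    then have "M \<subseteq> {m}"
      using \<open>f ` M \<subseteq> {w}\<close> inj sub[OF M] by (auto dest: inj_onD)
    then show False
      using nonsingular[OF M] by blast
  qed
  then have unions: "\<Union>(missing_face_complex V \<M>) = V" "\<Union>(missing_face_complex L ((`) f ` \<M>)) = L"
    using nonsingular by (auto intro!: Union_missing_face_complex)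
  have "S \<in> missing_face_complex V \<M> \<longleftrightarrow> f ` S \<in> missing_face_complex L ((`) f ` \<M>)" if "S \<subseteq> V" for S
    using that sub inj_on_image_subset_iff[OF inj] bij_betw_imp_surj_on[OF f]
    by (auto simp: missing_face_complex_def)
  then show ?thesis
    unfolding simplicial_iso_def unions using f by blast
qed

lemma partition_on_same_block:
  "partition_on A P \<Longrightarrow> B \<in> P \<Longrightarrow> C \<in> P \<Longrightarrow> i \<in> B \<Longrightarrow> i \<in> C \<Longrightarrow> B = C"
  using disjointD[OF partition_onD2] by blast

definition KP_vertices :: "nat \<Rightarrow> nat set set \<Rightarrow> (nat + nat set) set" where
  "KP_vertices n P = Inl ` {1..n+1} \<union> Inr ` P"

definition KP_missing_faces :: "nat set set \<Rightarrow> (nat + nat set) set set" where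
  "KP_missing_faces P = (\<lambda>B. insert (Inr B) (Inl ` B)) ` P"

lemma KP_missing_faces_subset:
  "partition_on {1..n+1} P \<Longrightarrow> M \<in> KP_missing_faces P \<Longrightarrow> M \<subseteq> KP_vertices n P"
  by (auto simp: KP_missing_faces_def KP_vertices_def dest: partition_onD1)

lemma KP_missing_face_image_not_singleton:
  assumes P: "partition_on {1..n+1} P" and f: "inj_on f (KP_vertices n P)" and M: "M \<in> KP_missing_faces P"
  shows "\<not> f ` M \<subseteq> {v}"
proof -
  obtain B where B: "B \<in> P" "M = insert (Inr B) (Inl ` B)"
    using M unfolding KP_missing_faces_def by blast
  moreover obtain b where "b \<in> B"
    using partition_onD3[OF P] B(1) by fastforce
  moreover have "Inr B \<in> KP_vertices n P" "Inl b \<in> KP_vertices n P"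
    using KP_missing_faces_subset[OF P M] B \<open>b \<in> B\<close> by blast+
  ultimately have "f (Inr B) \<in> f ` M" "f (Inl b) \<in> f ` M" "f (Inr B) \<noteq> f (Inl b)"
    using inj_onD[OF f] by auto
  then show ?thesis
    by blast
qed

lemma KP_missing_face_not_singleton:
  "partition_on {1..n+1} P \<Longrightarrow> M \<in> KP_missing_faces P \<Longrightarrow> \<not> M \<subseteq> {v}"
  using KP_missing_face_image_not_singleton[of n P id M v] by simp

lemma KP_subset_missing_face_complex:
  assumes P: "partition_on {1..n+1} P" and "T \<in> KP n P"
  shows "T \<in> missing_face_complex (KP_vertices n P) (KP_missing_faces P)"
proof -
  obtain F where T: "T \<noteq> {}" "T \<subseteq> F" and "F \<in> KP_facets n P"
    using assms(2) unfolding KP_def by blast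
  then obtain y where F: "F = y ` {1..n+1}"
    and y: "\<And>i. i \<in> {1..n+1} \<Longrightarrow> y i = Inl i \<or> (\<exists>B\<in>P. i \<in> B \<and> y i = Inr B)"
    unfolding KP_facets_def by blast
  have "y i \<in> KP_vertices n P" if "i \<in> {1..n+1}" for i
    using y[OF that] that by (auto simp: KP_vertices_def)
  then have "T \<subseteq> KP_vertices n P"
    using T(2) F by blast
  moreover have "\<not> insert (Inr B) (Inl ` B) \<subseteq> T" if "B \<in> P" for B
  proof
    assume missing: "insert (Inr B) (Inl ` B) \<subseteq> T"
    then obtain j where j: "j \<in> {1..n+1}" "y j = Inr B"
      using T(2) F by auto
    then have "j \<in> B"
      using y[OF j(1)] by auto
    then have "Inl j \<in> y ` {1..n+1}"
      using missing T(2) F by blast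
    then obtain j' where j': "j' \<in> {1..n+1}" "Inl j = y j'"
      by blast
    then have "j' = j"
      using y[OF j'(1)] by auto
    then show False
      using j j' by simp
  qed
  ultimately show ?thesis
    using T(1) by (auto simp: missing_face_complex_def KP_missing_faces_def)
qed

lemma KP_facet_of_representatives:
  assumes P: "partition_on {1..n+1} P" and R: "R \<subseteq> P" and k: "\<And>B. B \<in> R \<Longrightarrow> k B \<in> B"
  shows "Inr ` R \<union> Inl ` ({1..n+1} - k ` R) \<in> KP_facets n P"
proof -
  have inj: "inj_on k R"
  proof (rule inj_onI)
    fix B C
    assume "B \<in> R" "C \<in> R" "k B = k C"
    then show "B = C"
      using partition_on_same_block[OF P, of B C "k B"] k[of B] k[of C] R by auto
  qed
  have kU: "k B \<in> {1..n+1}" if "B \<in> R" for B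
    using k[OF that] R that partition_onD1[OF P] by blast
  define y where "y i = (if i \<in> k ` R then Inr (the_inv_into R k i) else Inl i)" for i
  have y_k: "y (k B) = Inr B" if "B \<in> R" for B
    using that inj by (simp add: y_def the_inv_into_f_f)
  have y_cases: "(i \<notin> k ` R \<and> y i = Inl i) \<or> (\<exists>B\<in>R. i = k B \<and> y i = Inr B)" for i
  proof (cases "i \<in> k ` R")
    case True
    then show ?thesis
      using y_k by blast
  qed (simp add: y_def)
  have image: "y ` {1..n+1} = Inr ` R \<union> Inl ` ({1..n+1} - k ` R)"
  proof
    show "y ` {1..n+1} \<subseteq> Inr ` R \<union> Inl ` ({1..n+1} - k ` R)"
      using y_cases by blast
    have "Inr ` R \<subseteq> y ` {1..n+1}"
      using y_k kU by (metis image_eqI image_subsetI)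
    moreover have "Inl ` ({1..n+1} - k ` R) \<subseteq> y ` {1..n+1}"
      by (auto simp: y_def)
    ultimately show "Inr ` R \<union> Inl ` ({1..n+1} - k ` R) \<subseteq> y ` {1..n+1}"
      by blast
  qed
  have "\<forall>i\<in>{1..n+1}. y i = Inl i \<or> (\<exists>B\<in>P. i \<in> B \<and> y i = Inr B)"
    using y_cases k R by blast
  moreover have "inj_on y {1..n+1}"
  proof (rule inj_onI)
    fix i j
    assume "y i = y j"
    then show "i = j"
      using y_cases[of i] y_cases[of j] by auto
  qed
  ultimately show ?thesis
    unfolding KP_facets_def image[symmetric] by blast
qed

lemma missing_face_complex_subset_KP:
  assumes P: "partition_on {1..n+1} P"
    and "T \<in> missing_face_complex (KP_vertices n P) (KP_missing_faces P)"
  shows "T \<in> KP n P"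
proof -
  have T: "T \<noteq> {}" "T \<subseteq> KP_vertices n P" "\<And>B. B \<in> P \<Longrightarrow> \<not> insert (Inr B) (Inl ` B) \<subseteq> T"
    using assms(2) by (auto simp: missing_face_complex_def KP_missing_faces_def)
  define R where "R = {B\<in>P. Inr B \<in> T}"
  have "\<forall>B\<in>R. \<exists>k. k \<in> B \<and> Inl k \<notin> T"
    using T(3) unfolding R_def by blast
  then obtain k where k: "\<And>B. B \<in> R \<Longrightarrow> k B \<in> B \<and> Inl (k B) \<notin> T"
    by metis
  have "Inr ` R \<union> Inl ` ({1..n+1} - k ` R) \<in> KP_facets n P"
    using KP_facet_of_representatives[OF P, of R k] k unfolding R_def by blast
  moreover have "T \<subseteq> Inr ` R \<union> Inl ` ({1..n+1} - k ` R)"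
    using T(2) k unfolding R_def KP_vertices_def by force
  ultimately show ?thesis
    using T(1) unfolding KP_def by blast
qed

lemma KP_eq_missing_face_complex:
  "partition_on {1..n+1} P \<Longrightarrow> KP n P = missing_face_complex (KP_vertices n P) (KP_missing_faces P)"
  using KP_subset_missing_face_complex missing_face_complex_subset_KP by blast

lemma finite_KP_vertices: "partition_on {1..n+1} P \<Longrightarrow> finite (KP_vertices n P)"
  using finite_elements[of "{1..n+1}" P] by (simp add: KP_vertices_def)

lemma boundary_complex_convex_hull_eq_missing_face_complex:
  fixes V :: "'a::euclidean_space set"
  assumes "finite V"
    and exposed: "\<And>W. W \<subseteq> V \<Longrightarrow> W \<noteq> {} \<Longrightarrow> (W \<noteq> V \<and> exposed_subset V W \<longleftrightarrow> (\<forall>M\<in>\<M>. \<not> M \<subseteq> W))"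
    and nonsingular: "\<And>M v. M \<in> \<M> \<Longrightarrow> \<not> M \<subseteq> {v}"
  shows "boundary_complex (convex hull V) = missing_face_complex V \<M>"
proof -
  have "exposed_subset V {v}" if "v \<in> V" for v
    using exposed[of "{v}"] nonsingular[of _ v] that by simp
  then have "boundary_complex (convex hull V) = {W. W \<noteq> {} \<and> W \<noteq> V \<and> exposed_subset V W}"
    by (rule boundary_complex_convex_hull[OF assms(1)])
  also have "\<dots> = missing_face_complex V \<M>"
  proof (intro set_eqI)
    fix W
    show "W \<in> {W. W \<noteq> {} \<and> W \<noteq> V \<and> exposed_subset V W} \<longleftrightarrow> W \<in> missing_face_complex V \<M>"
    proof (cases "W \<noteq> {} \<and> W \<subseteq> V")
      case True
      then have "W \<in> missing_face_complex V \<M> \<longleftrightarrow> (\<forall>M\<in>\<M>. \<not> M \<subseteq> W)"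
        by (simp add: missing_face_complex_def)
      then show ?thesis
        using exposed[of W] True by simp
    next
      case False
      then show ?thesis
        using exposed_subset_imp_subset by (auto simp: missing_face_complex_def)
    qed
  qed
  finally show ?thesis .
qed

lemma equilateral_missing_face_complex:
  assumes edges: "\<And>x y. x \<in> V \<Longrightarrow> y \<in> V \<Longrightarrow> x \<noteq> y \<Longrightarrow> {x, y} \<notin> \<M> \<Longrightarrow> dist x y = d"
    and W: "W \<in> missing_face_complex V \<M>"
  shows "equilateral W d"
  unfolding equilateral_def
proof (intro ballI impI)
  fix x y
  assume xy: "x \<in> W" "y \<in> W" "x \<noteq> y"
  have "W \<subseteq> V" "\<forall>M\<in>\<M>. \<not> M \<subseteq> W"
    using W by (simp_all add: missing_face_complex_def)
  then have "x \<in> V" "y \<in> V" "{x, y} \<notin> \<M>"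
    using xy by auto
  then show "dist x y = d"
    using edges xy(3) by simp
qed

lemma convex_hull_realizes_KP:
  fixes V :: "'a::euclidean_space set" and \<M> :: "'a set set"
  assumes P: "partition_on {1..n+1} P"
    and \<psi>: "bij_betw \<psi> (KP_vertices n P) V"
    and \<M>: "\<M> = (`) \<psi> ` KP_missing_faces P"
    and exposed: "\<And>W. W \<subseteq> V \<Longrightarrow> W \<noteq> {} \<Longrightarrow> (W \<noteq> V \<and> exposed_subset V W \<longleftrightarrow> (\<forall>M\<in>\<M>. \<not> M \<subseteq> W))"
    and edges: "\<And>x y. x \<in> V \<Longrightarrow> y \<in> V \<Longrightarrow> x \<noteq> y \<Longrightarrow> {x, y} \<notin> \<M> \<Longrightarrow> dist x y = d"
    and dim: "aff_dim V = int (n + 1)"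
  shows "\<exists>Q::'a set. polytope Q \<and> aff_dim Q = int (n + 1)
           \<and> (\<forall>F. F facet_of Q \<longrightarrow> regular_simplex F) \<and> simplicial_iso (boundary_complex Q) (KP n P)"
proof (intro exI conjI)
  let ?Q = "convex hull V"
  have finite: "finite V"
    using bij_betw_finite[OF \<psi>] finite_KP_vertices[OF P] by simp
  have nonsingular: "\<not> M \<subseteq> {v}" if "M \<in> \<M>" for M v
    using that KP_missing_face_image_not_singleton[OF P bij_betw_imp_inj_on[OF \<psi>]] unfolding \<M> by blast
  have boundary: "boundary_complex ?Q = missing_face_complex V \<M>"
    using boundary_complex_convex_hull_eq_missing_face_complex[OF finite exposed nonsingular] .
  show "polytope ?Q"
    using finite by (auto simp: polytope_def)
  show "aff_dim ?Q = int (n + 1)"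
    using dim by (simp add: aff_dim_convex_hull)
  have "\<forall>W\<in>boundary_complex ?Q. \<exists>d. equilateral W d"
    unfolding boundary using equilateral_missing_face_complex[OF edges] by blast
  then show "\<forall>F. F facet_of ?Q \<longrightarrow> regular_simplex F"
    using facets_regular_simplex_iff_boundary_equilateral[OF \<open>polytope ?Q\<close>] by blast
  have "simplicial_iso (missing_face_complex (KP_vertices n P) (KP_missing_faces P)) (missing_face_complex V \<M>)"
    unfolding \<M> using KP_missing_faces_subset[OF P] KP_missing_face_not_singleton[OF P]
    by (rule simplicial_iso_missing_face_complex[OF \<psi>])
  then show "simplicial_iso (boundary_complex ?Q) (KP n P)"
    unfolding boundary KP_eq_missing_face_complex[OF P] by (rule simplicial_iso_sym)
qed

section \<open>Three polytopes with regular simplices as facets\<close>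

lemma bij_betw_case_sum:
  assumes "inj_on f A" "inj_on g B" "f ` A \<inter> g ` B = {}"
  shows "bij_betw (case_sum f g) (Inl ` A \<union> Inr ` B) (f ` A \<union> g ` B)"
  unfolding bij_betw_def
proof
  show "inj_on (case_sum f g) (Inl ` A \<union> Inr ` B)"
  proof (rule inj_onI)
    fix x y
    assume "x \<in> Inl ` A \<union> Inr ` B" "y \<in> Inl ` A \<union> Inr ` B" "case_sum f g x = case_sum f g y"
    then show "x = y"
      using assms by (auto dest: inj_onD) (metis IntI empty_iff imageI)+
  qed
qed (simp add: image_Un image_image)

lemma image_KP_missing_faces_case_sum:
  "(`) (case_sum f g) ` KP_missing_faces P = (\<lambda>B. insert (g B) (f ` B)) ` P"
  by (simp add: KP_missing_faces_def image_image)

lemma Basis_enumeration: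
  assumes "DIM('a::euclidean_space) = n + 1"
  obtains \<beta> where "bij_betw \<beta> {1..n+1} (Basis :: 'a set)"
  using ex_bij_betw_nat_finite_1[of "Basis :: 'a set"] assms by auto

lemma dist_eq_sqrt_2I: "(dist x y)\<^sup>2 = 2 \<Longrightarrow> dist x y = sqrt 2"
  by (metis zero_le_dist real_sqrt_unique)

lemma dist_Basis:
  fixes e e' :: "'a::euclidean_space"
  assumes "e \<in> Basis" "e' \<in> Basis" "e \<noteq> e'"
  shows "dist e e' = sqrt 2"
  using assms
  by (intro dist_eq_sqrt_2I) (simp add: dist_norm power2_norm_eq_inner inner_diff_left inner_diff_right inner_Basis)

lemma Basis_neq_uminus_Basis:
  fixes e e' :: "'a::euclidean_space"
  assumes "e \<in> Basis" "e' \<in> Basis"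
  shows "e \<noteq> - e'"
proof
  assume "e = - e'"
  then have "e \<bullet> e' = - 1"
    using assms(2) by simp
  then show False
    using assms by (simp add: inner_Basis split: if_splits)
qed

lemma aff_dim_eq_DIM_if_equilateral_subset:
  fixes V :: "'a::euclidean_space set"
  assumes "S \<subseteq> V" "finite S" "equilateral S d" "card S = DIM('a) + 1"
  shows "aff_dim V = DIM('a)"
proof -
  have "aff_dim S = DIM('a)"
    using aff_dim_affine_independent[OF equilateral_imp_affine_independent[OF assms(2,3)]] assms(4) by simp
  then show ?thesis
    using aff_dim_subset[OF assms(1)] aff_dim_le_DIM[of V] by simp
qed

lemma exposed_subset_affine_independent:
  fixes V :: "'a::euclidean_space set"
  assumes "\<not> affine_dependent V" "W \<subseteq> V"
  shows "exposed_subset V W"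
proof -
  have "finite V"
    using aff_independent_finite[OF assms(1)] .
  let ?Q = "convex hull V"
  have "convex hull W face_of ?Q"
    using face_of_convex_hull_affine_independent[OF assms(1)] assms(2) by blast
  moreover have "polyhedron ?Q"
    using \<open>finite V\<close> by (intro polytope_imp_polyhedron) (auto simp: polytope_def)
  ultimately have "convex hull W exposed_face_of ?Q"
    using exposed_face_of_polyhedron by blast
  then obtain a b where ab: "?Q \<subseteq> {x. a \<bullet> x \<le> b}" "convex hull W = ?Q \<inter> {x. a \<bullet> x = b}"
    unfolding exposed_face_of_def by blast
  have "v \<in> W" if "v \<in> V" "a \<bullet> v = b" for v
  proof -
    have "v \<in> convex hull W"
      using that ab(2) hull_subset[of V convex] by blast
    moreover have "v extreme_point_of ?Q"
      using that extreme_point_of_convex_hull_affine_independent[OF assms(1)] by blast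
    ultimately have "v extreme_point_of convex hull W"
      using extreme_point_of_face[OF \<open>convex hull W face_of ?Q\<close>] by blast
    then show "v \<in> W"
      by (rule extreme_point_of_convex_hull)
  qed
  moreover have "a \<bullet> v = b" if "v \<in> W" for v
    using that ab(2) hull_subset[of W convex] by blast
  moreover have "a \<bullet> v \<le> b" if "v \<in> V" for v
    using that ab(1) hull_subset[of V convex] by blast
  ultimately show ?thesis
    unfolding exposed_subset_def using assms(2) by blast
qed

text \<open>\<open>simplex_apex = t *\<^sub>R One\<close>, where \<open>t\<close> is the negative root of \<open>DIM t\<^sup>2 - 2 t - 1 = 0\<close>; this makes
  it lie at distance \<open>sqrt 2\<close> from every basis vector, so that it completes \<open>Basis\<close> to a regular
  simplex.\<close>

definition simplex_apex :: "'a::euclidean_space" where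
  "simplex_apex = ((1 - sqrt (DIM('a) + 1)) / DIM('a)) *\<^sub>R One"

lemma inner_One_One: "(One :: 'a::euclidean_space) \<bullet> One = DIM('a)"
  by (simp add: inner_sum_right)

lemma dist_Basis_simplex_apex:
  fixes e :: "'a::euclidean_space"
  assumes "e \<in> Basis"
  shows "dist e simplex_apex = sqrt 2"
proof (rule dist_eq_sqrt_2I)
  define D where "D = real DIM('a)"
  define t where "t = (1 - sqrt (D + 1)) / D"
  have D: "D > 0"
    by (simp add: D_def)
  have "D * (D * t\<^sup>2 - 2 * t - 1) = (1 - sqrt (D + 1))\<^sup>2 - 2 * (1 - sqrt (D + 1)) - D"
    using D by (simp add: t_def power2_eq_square field_simps)
  also have "\<dots> = 0"
    using D by (simp add: power2_eq_square algebra_simps)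
  finally have t: "D * t\<^sup>2 - 2 * t = 1"
    using D by simp
  have apex: "simplex_apex = t *\<^sub>R (One :: 'a)"
    by (simp add: simplex_apex_def t_def D_def)
  have "(dist e simplex_apex)\<^sup>2 = e \<bullet> e - 2 * t * (e \<bullet> One) + t\<^sup>2 * (One \<bullet> (One :: 'a))"
    unfolding dist_norm power2_norm_eq_inner apex
    by (simp add: inner_diff_left inner_diff_right inner_commute algebra_simps power2_eq_square)
  also have "\<dots> = 2"
    using assms t by (simp add: inner_One_One D_def[symmetric] inner_commute[of e One] algebra_simps)
  finally show "(dist e simplex_apex)\<^sup>2 = 2" .
qed

lemma simplex_apex_notin_Basis: "(simplex_apex :: 'a::euclidean_space) \<notin> Basis"
proof
  assume "(simplex_apex :: 'a) \<in> Basis"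
  then have "One \<bullet> (simplex_apex :: 'a) = 1"
    by simp
  moreover have "One \<bullet> (simplex_apex :: 'a) = 1 - sqrt (DIM('a) + 1)"
    by (simp add: simplex_apex_def inner_One_One)
  ultimately show False
    by simp
qed

lemma equilateral_simplex_vertices:
  "equilateral (insert (simplex_apex :: 'a::euclidean_space) Basis) (sqrt 2)"
  unfolding equilateral_def using dist_Basis dist_Basis_simplex_apex
  by (auto simp: dist_commute)

lemma KP_single_block_realizable:
  assumes dim: "DIM('a::euclidean_space) = n + 1" and P: "partition_on {1..n+1} P" and "card P = 1"
  shows "\<exists>Q::'a set. polytope Q \<and> aff_dim Q = int (n + 1)
           \<and> (\<forall>F. F facet_of Q \<longrightarrow> regular_simplex F) \<and> simplicial_iso (boundary_complex Q) (KP n P)"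
proof -
  let ?U = "{1..n+1}"
  let ?V = "Basis \<union> {simplex_apex} :: 'a set"
  obtain X where "P = {X}"
    using \<open>card P = 1\<close> card_1_singletonE by blast
  then have P_eq: "P = {?U}"
    using partition_onD1[OF P] by simp
  obtain \<beta> where \<beta>: "bij_betw \<beta> ?U (Basis :: 'a set)"
    using Basis_enumeration[OF dim] by blast
  define \<psi> where "\<psi> = case_sum \<beta> (\<lambda>_::nat set. simplex_apex :: 'a)"
  have "bij_betw \<psi> (KP_vertices n P) (\<beta> ` ?U \<union> (\<lambda>_. simplex_apex) ` P)"
    unfolding \<psi>_def KP_vertices_def using \<beta> simplex_apex_notin_Basis[where 'a='a]
    by (intro bij_betw_case_sum) (auto simp: P_eq bij_betw_def)
  moreover have "\<beta> ` ?U \<union> (\<lambda>_. simplex_apex) ` P = ?V"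
    using \<beta> by (simp add: P_eq bij_betw_def)
  ultimately have bij: "bij_betw \<psi> (KP_vertices n P) ?V"
    by simp
  have missing: "{?V} = (`) \<psi> ` KP_missing_faces P"
    unfolding \<psi>_def image_KP_missing_faces_case_sum using \<beta> by (auto simp: P_eq bij_betw_def)
  have equilateral: "equilateral ?V (sqrt 2)"
    using equilateral_simplex_vertices by simp
  have card: "card ?V = DIM('a) + 1"
    using simplex_apex_notin_Basis[where 'a='a] by simp
  show ?thesis
  proof (rule convex_hull_realizes_KP[OF P bij missing])
    fix W
    assume "W \<subseteq> ?V"
    then show "W \<noteq> ?V \<and> exposed_subset ?V W \<longleftrightarrow> (\<forall>M\<in>{?V}. \<not> M \<subseteq> W)"
      using exposed_subset_affine_independent[OF equilateral_imp_affine_independent[OF _ equilateral]]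
      by auto
  next
    show "\<And>x y. x \<in> ?V \<Longrightarrow> y \<in> ?V \<Longrightarrow> x \<noteq> y \<Longrightarrow> {x, y} \<notin> {?V} \<Longrightarrow> dist x y = sqrt 2"
      using equilateral unfolding equilateral_def by blast
    show "aff_dim ?V = int (n + 1)"
      using aff_dim_eq_DIM_if_equilateral_subset[OF order_refl _ equilateral card] dim by simp
  qed
qed

lemma cross_polytope_vertex_inner:
  fixes x y :: "'a::euclidean_space"
  assumes "x \<in> Basis \<union> uminus ` Basis" "y \<in> Basis \<union> uminus ` Basis"
  shows "x \<bullet> y = (if y = x then 1 else if y = - x then -1 else 0)"
  using assms Basis_neq_uminus_Basis by (auto simp: inner_Basis)

lemma dist_cross_polytope_vertices:
  fixes x y :: "'a::euclidean_space"
  assumes "x \<in> Basis \<union> uminus ` Basis" "y \<in> Basis \<union> uminus ` Basis" "x \<noteq> y" "y \<noteq> - x"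
  shows "dist x y = sqrt 2"
proof (rule dist_eq_sqrt_2I)
  have "(dist x y)\<^sup>2 = x \<bullet> x - 2 * (x \<bullet> y) + y \<bullet> y"
    by (simp add: dist_norm power2_norm_eq_inner inner_diff_left inner_diff_right inner_commute)
  then show "(dist x y)\<^sup>2 = 2"
    using assms cross_polytope_vertex_inner[OF assms(1,2)] cross_polytope_vertex_inner[OF assms(1,1)]
      cross_polytope_vertex_inner[OF assms(2,2)] by simp
qed

lemma cross_polytope_vertex_antipodal:
  fixes v :: "'a::euclidean_space"
  assumes "v \<in> Basis \<union> uminus ` Basis"
  shows "- v \<in> Basis \<union> uminus ` Basis" "- v \<noteq> v"
  using assms Basis_neq_uminus_Basis[of v v] Basis_neq_uminus_Basis[of "- v" "- v"] by auto

lemma inner_sum_cross_polytope_vertices: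
  fixes v :: "'a::euclidean_space"
  assumes W: "W \<subseteq> Basis \<union> uminus ` Basis" and v: "v \<in> Basis \<union> uminus ` Basis"
  shows "(\<Sum>W) \<bullet> v = (if v \<in> W then 1 else 0) - (if - v \<in> W then 1 else 0)"
proof -
  have "finite W"
    using W by (rule finite_subset) simp
  have "(\<Sum>W) \<bullet> v = (\<Sum>w\<in>W. (if w = v then 1 else 0) + (if w = - v then -1 else 0))"
    unfolding inner_sum_left using W v cross_polytope_vertex_antipodal[OF v]
    by (intro sum.cong) (auto simp: cross_polytope_vertex_inner subset_iff)
  also have "\<dots> = (if v \<in> W then 1 else 0) - (if - v \<in> W then 1 else 0)"
    using \<open>finite W\<close> by (simp add: sum.distrib)
  finally show ?thesis .
qed

lemma cross_polytope_exposed_iff: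
  fixes W :: "'a::euclidean_space set"
  assumes W: "W \<subseteq> Basis \<union> uminus ` Basis"
  shows "W \<noteq> Basis \<union> uminus ` Basis \<and> exposed_subset (Basis \<union> uminus ` Basis) W
    \<longleftrightarrow> (\<forall>e\<in>Basis. \<not> {e, - e} \<subseteq> W)"
proof
  let ?V = "Basis \<union> uminus ` Basis :: 'a set"
  assume "W \<noteq> ?V \<and> exposed_subset ?V W"
  then obtain a b where ab: "\<forall>v\<in>?V. a \<bullet> v \<le> b" "W = {v\<in>?V. a \<bullet> v = b}" and "W \<noteq> ?V"
    unfolding exposed_subset_def by blast
  show "\<forall>e\<in>Basis. \<not> {e, - e} \<subseteq> W"
  proof (intro ballI notI)
    fix e :: 'a
    assume "e \<in> Basis" "{e, - e} \<subseteq> W"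
    then have "b = 0"
      using ab(2) by auto
    have "a \<bullet> v = b" if "v \<in> ?V" for v
    proof -
      have "a \<bullet> v \<le> 0" "a \<bullet> (- v) \<le> 0"
        using ab(1) that cross_polytope_vertex_antipodal(1)[OF that] \<open>b = 0\<close> by blast+
      then show ?thesis
        using \<open>b = 0\<close> by simp
    qed
    then show False
      using ab(2) \<open>W \<noteq> ?V\<close> by blast
  qed
next
  let ?V = "Basis \<union> uminus ` Basis :: 'a set"
  assume no_antipodal: "\<forall>e\<in>Basis. \<not> {e, - e} \<subseteq> W"
  then have "- v \<notin> W" if "v \<in> W" for v
    using that W by auto
  then have "(\<Sum>W) \<bullet> v = 1 \<longleftrightarrow> v \<in> W" if "v \<in> ?V" for v
    using inner_sum_cross_polytope_vertices[OF W that] by auto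
  then have "W = {v\<in>?V. (\<Sum>W) \<bullet> v = 1}"
    using W by blast
  moreover have "\<forall>v\<in>?V. (\<Sum>W) \<bullet> v \<le> 1"
    using inner_sum_cross_polytope_vertices[OF W] by auto
  moreover obtain e :: 'a where "e \<in> Basis"
    using nonempty_Basis by blast
  then have "W \<noteq> ?V"
    using no_antipodal by auto
  ultimately show "W \<noteq> ?V \<and> exposed_subset ?V W"
    unfolding exposed_subset_def by blast
qed

lemma aff_dim_cross_polytope_vertices:
  "aff_dim (Basis \<union> uminus ` Basis :: 'a::euclidean_space set) = DIM('a)"
proof -
  let ?V = "Basis \<union> uminus ` Basis :: 'a set"
  obtain e :: 'a where "e \<in> Basis"
    using nonempty_Basis by blast
  then have "(1/2) *\<^sub>R e + (1/2) *\<^sub>R (- e) \<in> affine hull ?V"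
    by (intro mem_affine[OF affine_affine_hull]) (auto intro: hull_inc)
  then have "aff_dim ?V = dim ?V"
    by (intro aff_dim_zero) simp
  moreover have "span ?V = UNIV"
    using span_mono[of Basis ?V] span_Basis by auto
  ultimately show ?thesis
    by (simp add: dim_eq_full)
qed

lemma KP_singleton_blocks_realizable:
  assumes dim: "DIM('a::euclidean_space) = n + 1" and P: "partition_on {1..n+1} P"
    and singletons: "\<forall>B\<in>P. card B = 1"
  shows "\<exists>Q::'a set. polytope Q \<and> aff_dim Q = int (n + 1)
           \<and> (\<forall>F. F facet_of Q \<longrightarrow> regular_simplex F) \<and> simplicial_iso (boundary_complex Q) (KP n P)"
proof -
  let ?U = "{1..n+1}"
  let ?V = "Basis \<union> uminus ` Basis :: 'a set"
  have P_eq: "P = (\<lambda>i. {i}) ` ?U"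
  proof -
    have "P = (\<lambda>i. {i}) ` \<Union>P"
      using singletons by (force simp: card_1_singleton_iff)
    then show ?thesis
      using partition_onD1[OF P] by simp
  qed
  obtain \<beta> where \<beta>: "bij_betw \<beta> ?U (Basis :: 'a set)"
    using Basis_enumeration[OF dim] by blast
  define \<psi> where "\<psi> = case_sum \<beta> (\<lambda>B. - \<beta> (the_elem B))"
  have "inj_on (\<lambda>B. - \<beta> (the_elem B)) P"
    using bij_betw_imp_inj_on[OF \<beta>] by (auto simp: P_eq inj_on_def)
  moreover have "(\<lambda>B. - \<beta> (the_elem B)) ` P = uminus ` \<beta> ` ?U"
    by (simp add: P_eq image_image)
  moreover have "Basis \<inter> uminus ` Basis = ({} :: 'a set)"
    using Basis_neq_uminus_Basis by fastforce
  ultimately have bij: "bij_betw \<psi> (KP_vertices n P) ?V"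
    using bij_betw_case_sum[of \<beta> ?U "\<lambda>B. - \<beta> (the_elem B)" P] \<beta>
    unfolding \<psi>_def KP_vertices_def bij_betw_def by force
  have missing: "(\<lambda>e. {- e, e}) ` Basis = (`) \<psi> ` KP_missing_faces P"
    unfolding \<psi>_def image_KP_missing_faces_case_sum bij_betw_imp_surj_on[OF \<beta>, symmetric]
    by (simp add: P_eq image_image)
  show ?thesis
  proof (rule convex_hull_realizes_KP[OF P bij missing])
    fix W
    assume "W \<subseteq> ?V"
    then show "W \<noteq> ?V \<and> exposed_subset ?V W \<longleftrightarrow> (\<forall>M\<in>(\<lambda>e. {- e, e}) ` Basis. \<not> M \<subseteq> W)"
      using cross_polytope_exposed_iff[of W] by (simp add: insert_commute)
  next
    fix x y
    assume "x \<in> ?V" "y \<in> ?V" "x \<noteq> y" "{x, y} \<notin> (\<lambda>e. {- e, e}) ` Basis"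
    moreover have "y \<noteq> - x"
    proof
      assume "y = - x"
      then have "{x, y} \<in> (\<lambda>e. {- e, e}) ` Basis"
        using \<open>x \<in> ?V\<close> by (auto simp: insert_commute)
      then show False
        using \<open>{x, y} \<notin> (\<lambda>e. {- e, e}) ` Basis\<close> by blast
    qed
    ultimately show "dist x y = sqrt 2"
      by (intro dist_cross_polytope_vertices)
  next
    show "aff_dim ?V = int (n + 1)"
      using aff_dim_cross_polytope_vertices[where 'a='a] dim by simp
  qed
qed

text \<open>The base is the simplex \<open>Basis\<close> translated so that its centroid is the origin; it lies in
  the hyperplane orthogonal to \<open>One\<close>. The apexes \<open>\<plusminus>bipyramid_apex\<close> lie on the line through \<open>One\<close>, at
  the height that makes their distance to every base vertex \<open>sqrt 2\<close>.\<close>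

definition bipyramid_base :: "'a::euclidean_space \<Rightarrow> 'a" where
  "bipyramid_base e = e - (1 / DIM('a)) *\<^sub>R One"

definition bipyramid_apex :: "'a::euclidean_space" where
  "bipyramid_apex = (sqrt (DIM('a) + 1) / DIM('a)) *\<^sub>R One"

lemma inner_One_bipyramid_base:
  fixes e :: "'a::euclidean_space"
  assumes "e \<in> Basis"
  shows "One \<bullet> bipyramid_base e = 0"
  using assms by (simp add: bipyramid_base_def inner_diff_right inner_One_One)

lemma inner_bipyramid_base:
  fixes e e' :: "'a::euclidean_space"
  assumes "e \<in> Basis" "e' \<in> Basis"
  shows "bipyramid_base e \<bullet> bipyramid_base e' = (if e = e' then 1 else 0) - 1 / DIM('a)"
proof -
  have "bipyramid_base e \<bullet> bipyramid_base e' = e \<bullet> bipyramid_base e'"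
    using inner_One_bipyramid_base[OF assms(2)] by (simp add: bipyramid_base_def inner_diff_left)
  also have "\<dots> = (if e = e' then 1 else 0) - 1 / DIM('a)"
    using assms by (simp add: bipyramid_base_def inner_diff_right inner_Basis inner_commute[of e One])
  finally show ?thesis .
qed

lemma sum_bipyramid_base: "(\<Sum>e\<in>Basis. bipyramid_base e) = (0 :: 'a::euclidean_space)"
  by (simp add: bipyramid_base_def sum_subtractf sum_constant_scaleR)

lemma inj_on_bipyramid_base: "inj_on bipyramid_base (Basis :: 'a::euclidean_space set)"
  by (rule inj_onI) (simp add: bipyramid_base_def)

lemma inner_One_bipyramid_apex: "One \<bullet> (bipyramid_apex :: 'a::euclidean_space) = sqrt (DIM('a) + 1)"
  by (simp add: bipyramid_apex_def inner_One_One)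

lemma bipyramid_apex_notin_base:
  "(bipyramid_apex :: 'a::euclidean_space) \<notin> bipyramid_base ` Basis"
  "- (bipyramid_apex :: 'a::euclidean_space) \<notin> bipyramid_base ` Basis"
  "- (bipyramid_apex :: 'a::euclidean_space) \<noteq> bipyramid_apex"
  using inner_One_bipyramid_apex[where 'a='a] inner_One_bipyramid_base[where 'a='a]
  by (auto simp: inner_minus_right dest: arg_cong[of _ _ "inner One"])

lemma dist_bipyramid_base:
  fixes e e' :: "'a::euclidean_space"
  assumes "e \<in> Basis" "e' \<in> Basis" "e \<noteq> e'"
  shows "dist (bipyramid_base e) (bipyramid_base e') = sqrt 2"
  using dist_Basis[OF assms] by (simp add: bipyramid_base_def dist_norm)

lemma dist_bipyramid_base_apex:
  fixes e :: "'a::euclidean_space"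
  assumes "e \<in> Basis"
  shows "dist (bipyramid_base e) bipyramid_apex = sqrt 2"
    and "dist (bipyramid_base e) (- bipyramid_apex) = sqrt 2"
proof -
  define D where "D = real DIM('a)"
  have D: "D > 0"
    by (simp add: D_def)
  have apex: "bipyramid_apex = (sqrt (D + 1) / D) *\<^sub>R (One :: 'a)"
    by (simp add: bipyramid_apex_def D_def)
  have "dist (bipyramid_base e) (\<sigma> *\<^sub>R bipyramid_apex) = sqrt 2" if "\<sigma>\<^sup>2 = 1" for \<sigma>
  proof (rule dist_eq_sqrt_2I)
    have "(dist (bipyramid_base e) (\<sigma> *\<^sub>R bipyramid_apex))\<^sup>2
        = bipyramid_base e \<bullet> bipyramid_base e - 2 * \<sigma> * (sqrt (D + 1) / D) * (One \<bullet> bipyramid_base e)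
          + \<sigma>\<^sup>2 * (sqrt (D + 1) / D)\<^sup>2 * (One \<bullet> (One :: 'a))"
      unfolding dist_norm power2_norm_eq_inner apex
      by (simp add: inner_diff_left inner_diff_right inner_commute algebra_simps power2_eq_square)
    also have "\<dots> = (1 - 1 / D) + (D + 1) / D"
      using that D inner_bipyramid_base[OF assms(1,1)] inner_One_bipyramid_base[OF assms(1)]
      by (simp add: inner_One_One D_def[symmetric] power_divide power2_eq_square[of D])
    also have "\<dots> = 2"
      using D by (simp add: field_simps)
    finally show "(dist (bipyramid_base e) (\<sigma> *\<^sub>R bipyramid_apex))\<^sup>2 = 2" .
  qed
  from this[of 1] this[of "-1"] show "dist (bipyramid_base e) bipyramid_apex = sqrt 2"
    and "dist (bipyramid_base e) (- bipyramid_apex) = sqrt 2"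
    by simp_all
qed

definition bipyramid_vertices :: "'a::euclidean_space set" where
  "bipyramid_vertices = insert bipyramid_apex (insert (- bipyramid_apex) (bipyramid_base ` Basis))"

lemma inner_sum_bipyramid_base:
  fixes e' :: "'a::euclidean_space"
  assumes "K \<subseteq> Basis" "e' \<in> Basis"
  shows "(\<Sum>e\<in>K. bipyramid_base e) \<bullet> bipyramid_base e' = (if e' \<in> K then 1 else 0) - card K / DIM('a)"
proof -
  have "finite K"
    using finite_subset[OF assms(1) finite_Basis] .
  have "bipyramid_base e \<bullet> bipyramid_base e' = (if e = e' then 1 else 0) - 1 / DIM('a)" if "e \<in> K" for e
    using inner_bipyramid_base[OF subsetD[OF assms(1) that] assms(2)] .
  then have "(\<Sum>e\<in>K. bipyramid_base e) \<bullet> bipyramid_base e' = (\<Sum>e\<in>K. (if e = e' then 1 else 0) - 1 / DIM('a))"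
    unfolding inner_sum_left by (rule sum.cong[OF refl])
  also have "\<dots> = (\<Sum>e\<in>K. if e = e' then 1 else 0) - (\<Sum>e\<in>K. 1 / DIM('a))"
    by (rule sum_subtractf)
  also have "\<dots> = (if e' \<in> K then 1 else 0) - card K / DIM('a)"
    using \<open>finite K\<close> by simp
  finally show ?thesis .
qed

lemma inner_sum_bipyramid_base_apex:
  assumes "K \<subseteq> (Basis :: 'a::euclidean_space set)"
  shows "(\<Sum>e\<in>K. bipyramid_base e) \<bullet> (bipyramid_apex :: 'a) = 0"
proof -
  have "bipyramid_base e \<bullet> (bipyramid_apex :: 'a) = 0" if "e \<in> K" for e
    using inner_One_bipyramid_base[of e] that assms by (auto simp: bipyramid_apex_def inner_commute)
  then show ?thesis
    by (simp add: inner_sum_left)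
qed

lemma bipyramid_exposed_subset_avoids:
  fixes W :: "'a::euclidean_space set"
  assumes "W \<noteq> bipyramid_vertices" "exposed_subset bipyramid_vertices W"
  shows "\<not> {bipyramid_apex, - bipyramid_apex} \<subseteq> W" "\<not> bipyramid_base ` Basis \<subseteq> W"
proof -
  let ?V = "bipyramid_vertices :: 'a set" and ?h = "bipyramid_apex :: 'a" and ?B = "bipyramid_base ` Basis :: 'a set"
  obtain a b where le: "\<forall>v\<in>?V. a \<bullet> v \<le> b" and W: "W = {v\<in>?V. a \<bullet> v = b}"
    using assms(2) unfolding exposed_subset_def by blast
  have le_base: "a \<bullet> bipyramid_base e \<le> b" if "e \<in> Basis" for e
    using le that unfolding bipyramid_vertices_def by simp
  have le_apex: "a \<bullet> ?h \<le> b" "- (a \<bullet> ?h) \<le> b"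
    using le unfolding bipyramid_vertices_def by simp_all
  have sum_base: "(\<Sum>e\<in>Basis. a \<bullet> bipyramid_base e) = 0"
    by (simp add: inner_sum_right[symmetric] sum_bipyramid_base)
  have full: False if "b = 0" "a \<bullet> ?h = 0" "\<forall>e\<in>Basis. a \<bullet> bipyramid_base e = 0"
  proof -
    have "\<forall>v\<in>?V. a \<bullet> v = b"
      using that unfolding bipyramid_vertices_def by simp
    then show False
      using W assms(1) by blast
  qed
  show "\<not> {?h, - ?h} \<subseteq> W"
  proof
    assume "{?h, - ?h} \<subseteq> W"
    then have "a \<bullet> ?h = b" "- (a \<bullet> ?h) = b"
      using W by auto
    moreover have "\<forall>e\<in>Basis. - (a \<bullet> bipyramid_base e) = 0"
      using sum_nonneg_eq_0_iff[of Basis "\<lambda>e. - (a \<bullet> bipyramid_base e)"] sum_base le_base \<open>a \<bullet> ?h = b\<close> \<open>- (a \<bullet> ?h) = b\<close>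
      by (simp add: sum_negf)
    ultimately show False
      using full by simp
  qed
  show "\<not> ?B \<subseteq> W"
  proof
    assume "?B \<subseteq> W"
    then have "\<forall>e\<in>Basis. a \<bullet> bipyramid_base e = b"
      using W by blast
    then have "b = 0"
      using sum_base by simp
    then show False
      using full le_apex \<open>\<forall>e\<in>Basis. a \<bullet> bipyramid_base e = b\<close> by simp
  qed
qed

lemma bipyramid_exposed_subset_if_avoids:
  fixes W :: "'a::euclidean_space set"
  assumes W: "W \<subseteq> bipyramid_vertices"
    and not_apexes: "\<not> {bipyramid_apex, - bipyramid_apex} \<subseteq> W" and not_base: "\<not> bipyramid_base ` Basis \<subseteq> W"
  shows "exposed_subset bipyramid_vertices W"
proof -
  let ?V = "bipyramid_vertices :: 'a set" and ?h = "bipyramid_apex :: 'a"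
  define K where "K = {e\<in>Basis. bipyramid_base e \<notin> W}"
  define b where "b = real (card K) / DIM('a)"
  define z where "z = (if ?h \<in> W then 1 else if - ?h \<in> W then -1 else (0::real))"
  define a where "a = (z * b / sqrt (DIM('a) + 1)) *\<^sub>R One - (\<Sum>e\<in>K. bipyramid_base e)"
  have K: "K \<subseteq> Basis" "K \<noteq> {}"
    using not_base by (auto simp: K_def)
  then have "b > 0"
    by (simp add: b_def card_gt_0_iff finite_subset)
  have a_base: "a \<bullet> bipyramid_base e = b - (if e \<in> K then 1 else 0)" if "e \<in> Basis" for e
    using inner_sum_bipyramid_base[OF K(1) that] inner_One_bipyramid_base[OF that]
    by (simp add: a_def b_def inner_diff_left)
  have a_apex: "a \<bullet> ?h = z * b"
    using inner_sum_bipyramid_base_apex[OF K(1)] inner_One_bipyramid_apex[where 'a='a]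
    by (simp add: a_def inner_diff_left add.commute)
  have "a \<bullet> v \<le> b \<and> (a \<bullet> v = b \<longleftrightarrow> v \<in> W)" if v: "v \<in> ?V" for v
  proof -
    consider "v = ?h" | "v = - ?h" | e where "e \<in> Basis" "v = bipyramid_base e"
      using v unfolding bipyramid_vertices_def by blast
    then show ?thesis
    proof cases
      case 1
      then show ?thesis
        using a_apex \<open>b > 0\<close> not_apexes by (simp add: z_def)
    next
      case 2
      then show ?thesis
        using a_apex \<open>b > 0\<close> not_apexes bipyramid_apex_notin_base(3)[where 'a='a] by (simp add: z_def)
    next
      case 3
      then show ?thesis
        using a_base[OF 3(1)] by (simp add: K_def)
    qed
  qed
  then have "(\<forall>v\<in>?V. a \<bullet> v \<le> b) \<and> W = {v\<in>?V. a \<bullet> v = b}"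
    using W by blast
  then show ?thesis
    unfolding exposed_subset_def by blast
qed

lemma bipyramid_exposed_iff:
  fixes W :: "'a::euclidean_space set"
  assumes "W \<subseteq> bipyramid_vertices"
  shows "W \<noteq> bipyramid_vertices \<and> exposed_subset bipyramid_vertices W
    \<longleftrightarrow> \<not> {bipyramid_apex, - bipyramid_apex} \<subseteq> W \<and> \<not> bipyramid_base ` Basis \<subseteq> W"
proof -
  have base: "bipyramid_base ` Basis \<subseteq> (bipyramid_vertices :: 'a set)"
    by (auto simp: bipyramid_vertices_def)
  show ?thesis
  proof
    assume "W \<noteq> bipyramid_vertices \<and> exposed_subset bipyramid_vertices W"
    then show "\<not> {bipyramid_apex, - bipyramid_apex} \<subseteq> W \<and> \<not> bipyramid_base ` Basis \<subseteq> W"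
      using bipyramid_exposed_subset_avoids[of W] by simp
  next
    assume avoids: "\<not> {bipyramid_apex, - bipyramid_apex} \<subseteq> W \<and> \<not> bipyramid_base ` Basis \<subseteq> W"
    then have "W \<noteq> bipyramid_vertices"
      using base by blast
    then show "W \<noteq> bipyramid_vertices \<and> exposed_subset bipyramid_vertices W"
      using bipyramid_exposed_subset_if_avoids[OF assms] avoids by simp
  qed
qed

lemma dist_bipyramid_vertices:
  fixes x y :: "'a::euclidean_space"
  assumes "x \<in> bipyramid_vertices" "y \<in> bipyramid_vertices" "x \<noteq> y" "{x, y} \<noteq> {bipyramid_apex, - bipyramid_apex}"
  shows "dist x y = sqrt 2"
proof -
  show ?thesis
    using assms dist_bipyramid_base dist_bipyramid_base_apex
    by (auto simp: bipyramid_vertices_def doubleton_eq_iff) (metis dist_commute)+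
qed

lemma aff_dim_bipyramid_vertices: "aff_dim (bipyramid_vertices :: 'a::euclidean_space set) = DIM('a)"
proof (rule aff_dim_eq_DIM_if_equilateral_subset)
  let ?S = "insert bipyramid_apex (bipyramid_base ` Basis) :: 'a set"
  show "?S \<subseteq> bipyramid_vertices"
    by (auto simp: bipyramid_vertices_def)
  show "finite ?S"
    by simp
  show "equilateral ?S (sqrt 2)"
    unfolding equilateral_def using dist_bipyramid_base dist_bipyramid_base_apex(1)
    by (auto simp: dist_commute)
  show "card ?S = DIM('a) + 1"
    using bipyramid_apex_notin_base(1)[where 'a='a] card_image[OF inj_on_bipyramid_base[where 'a='a]]
    by simp
qed

lemma partition_on_two_blocks:
  assumes P: "partition_on {1..n+1} P" and two: "\<exists>A B. P = {A, B} \<and> card A = 1 \<and> card B = n"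
  obtains a where "a \<in> {1..n+1}" "P = {{a}, {1..n+1} - {a}}"
proof -
  obtain a B where P_eq: "P = {{a}, B}" and "card B = n"
    using two by (auto simp: card_1_singleton_iff)
  have "a \<in> {1..n+1}" "B \<subseteq> {1..n+1}"
    using partition_onD1[OF P] P_eq by auto
  moreover have "{a} \<noteq> B"
  proof
    assume "{a} = B"
    then have "{1..n+1} = {a}"
      using partition_onD1[OF P] P_eq by simp
    then have "n = 0"
      using card_atLeastAtMost[of 1 "n + 1"] by simp
    then show False
      using \<open>card B = n\<close> \<open>{a} = B\<close> by auto
  qed
  moreover have "{a} \<inter> B = {}"
    using disjointD[OF partition_onD2[OF P], of "{a}" B] P_eq \<open>{a} \<noteq> B\<close> by simp
  ultimately have "B = {1..n+1} - {a}"
    using partition_onD1[OF P] P_eq by auto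
  then show ?thesis
    using that \<open>a \<in> {1..n+1}\<close> P_eq by blast
qed

text \<open>For \<open>P = {{a}, {1..n+1} - {a}}\<close>: the vertex \<open>a\<close> and the new vertex of its block go to the
  two apexes, and the new vertex of the other block takes the place of \<open>a\<close> in the base.\<close>

definition bipyramid_labelling :: "(nat \<Rightarrow> 'a::euclidean_space) \<Rightarrow> nat \<Rightarrow> nat + nat set \<Rightarrow> 'a" where
  "bipyramid_labelling u a = case_sum (\<lambda>i. if i = a then bipyramid_apex else u i)
     (\<lambda>C. if C = {a} then - bipyramid_apex else u a)"

lemma bij_betw_bipyramid_labelling:
  fixes u :: "nat \<Rightarrow> 'a::euclidean_space"
  assumes u: "bij_betw u {1..n+1} (bipyramid_base ` Basis)" and a: "a \<in> {1..n+1}"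
  shows "bij_betw (bipyramid_labelling u a) (KP_vertices n {{a}, {1..n+1} - {a}}) bipyramid_vertices"
proof -
  let ?U = "{1..n+1}" and ?h = "bipyramid_apex :: 'a" and ?P = "{{a}, {1..n+1} - {a}}"
  define f where "f i = (if i = a then ?h else u i)" for i
  define g where "g C = (if C = {a} then - ?h else u a)" for C :: "nat set"
  have u_ne: "u i \<noteq> ?h" "u i \<noteq> - ?h" if "i \<in> ?U" for i
    using u that bipyramid_apex_notin_base(1,2)[where 'a='a] unfolding bij_betw_def by force+
  have inj_f: "inj_on f ?U"
  proof (rule inj_onI)
    fix i j
    assume "i \<in> ?U" "j \<in> ?U" "f i = f j"
    then show "i = j"
      using inj_onD[OF bij_betw_imp_inj_on[OF u]] u_ne by (auto simp: f_def eq_commute[of ?h] split: if_splits)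
  qed
  have inj_g: "inj_on g ?P"
    using u_ne(2)[OF a] by (auto simp: g_def inj_on_def)
  have gP: "g ` ?P = {- ?h, u a}"
    by (auto simp: g_def)
  have "f i \<notin> g ` ?P" if "i \<in> ?U" for i
  proof (cases "i = a")
    case True
    then show ?thesis
      using bipyramid_apex_notin_base(3)[where 'a='a] u_ne[OF a] unfolding gP by (auto simp: f_def)
  next
    case False
    then have "u i \<noteq> u a"
      using inj_onD[OF bij_betw_imp_inj_on[OF u] _ that a] by auto
    then show ?thesis
      using False u_ne[OF that] unfolding gP by (auto simp: f_def)
  qed
  then have disjoint: "f ` ?U \<inter> g ` ?P = {}"
    by blast
  have "f ` ?U = insert ?h (u ` (?U - {a}))" "u ` ?U = insert (u a) (u ` (?U - {a}))"
    using a by (auto simp: f_def)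
  then have "f ` ?U \<union> g ` ?P = bipyramid_vertices"
    unfolding bipyramid_vertices_def bij_betw_imp_surj_on[OF u, symmetric] gP by auto
  then show ?thesis
    using bij_betw_case_sum[OF inj_f inj_g disjoint]
    unfolding KP_vertices_def bipyramid_labelling_def f_def g_def by simp
qed

lemma image_KP_missing_faces_bipyramid_labelling:
  fixes u :: "nat \<Rightarrow> 'a::euclidean_space"
  assumes u: "bij_betw u {1..n+1} (bipyramid_base ` Basis)" and a: "a \<in> {1..n+1}"
  shows "(`) (bipyramid_labelling u a) ` KP_missing_faces {{a}, {1..n+1} - {a}}
    = {{- bipyramid_apex, bipyramid_apex}, bipyramid_base ` Basis}"
proof -
  have "insert (u a) (u ` ({1..n+1} - {a})) = bipyramid_base ` Basis"
    using a bij_betw_imp_surj_on[OF u] by blast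
  then show ?thesis
    unfolding bipyramid_labelling_def image_KP_missing_faces_case_sum by auto
qed

lemma KP_two_blocks_realizable:
  assumes dim: "DIM('a::euclidean_space) = n + 1" and P: "partition_on {1..n+1} P"
    and two: "\<exists>A B. P = {A, B} \<and> card A = 1 \<and> card B = n"
  shows "\<exists>Q::'a set. polytope Q \<and> aff_dim Q = int (n + 1)
           \<and> (\<forall>F. F facet_of Q \<longrightarrow> regular_simplex F) \<and> simplicial_iso (boundary_complex Q) (KP n P)"
proof -
  let ?h = "bipyramid_apex :: 'a" and ?V = "bipyramid_vertices :: 'a set"
  obtain a where a: "a \<in> {1..n+1}" and P_eq: "P = {{a}, {1..n+1} - {a}}"
    using partition_on_two_blocks[OF P two] by blast
  obtain \<beta> where "bij_betw \<beta> {1..n+1} (Basis :: 'a set)"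
    using Basis_enumeration[OF dim] by blast
  then have u: "bij_betw (bipyramid_base \<circ> \<beta>) {1..n+1} (bipyramid_base ` Basis :: 'a set)"
    using bij_betw_trans inj_on_imp_bij_betw[OF inj_on_bipyramid_base] by blast
  note bij = bij_betw_bipyramid_labelling[OF u a, folded P_eq]
  note missing = image_KP_missing_faces_bipyramid_labelling[OF u a, folded P_eq, symmetric]
  have swap: "{- ?h, ?h} = {?h, - ?h}"
    by blast
  show ?thesis
  proof (rule convex_hull_realizes_KP[OF P bij missing])
    fix W
    assume "W \<subseteq> ?V"
    then show "W \<noteq> ?V \<and> exposed_subset ?V W \<longleftrightarrow> (\<forall>M\<in>{{- ?h, ?h}, bipyramid_base ` Basis}. \<not> M \<subseteq> W)"
      using bipyramid_exposed_iff[of W] unfolding swap by simp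
  next
    fix x y
    assume "x \<in> ?V" "y \<in> ?V" "x \<noteq> y" "{x, y} \<notin> {{- ?h, ?h}, bipyramid_base ` Basis}"
    then show "dist x y = sqrt 2"
      unfolding swap by (intro dist_bipyramid_vertices) auto
  next
    show "aff_dim ?V = int (n + 1)"
      using aff_dim_bipyramid_vertices[where 'a='a] dim by simp
  qed
qed

section \<open>Partitions that admit no realization\<close>

lemma simplicial_iso_boundary_complex_equilateral:
  fixes Q :: "'a::euclidean_space set"
  assumes "polytope Q" "\<forall>F. F facet_of Q \<longrightarrow> regular_simplex F" "simplicial_iso (boundary_complex Q) K"
  obtains g :: "'b \<Rightarrow> 'a" where "inj_on g (\<Union>K)" "\<And>T. T \<in> K \<Longrightarrow> \<exists>d. equilateral (g ` T) d"
proof -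
  obtain g where g: "bij_betw g (\<Union>K) (\<Union>(boundary_complex Q))"
    and faces: "\<And>T. T \<subseteq> \<Union>K \<Longrightarrow> T \<in> K \<longleftrightarrow> g ` T \<in> boundary_complex Q"
    using simplicial_iso_sym[OF assms(3)] unfolding simplicial_iso_def by blast
  have "\<exists>d. equilateral (g ` T) d" if "T \<in> K" for T
    using faces[of T] that facets_regular_simplex_iff_boundary_equilateral[OF assms(1)] assms(2) by blast
  then show ?thesis
    using that bij_betw_imp_inj_on[OF g] by blast
qed

lemma Union_KP: "partition_on {1..n+1} P \<Longrightarrow> \<Union>(KP n P) = KP_vertices n P"
  unfolding KP_eq_missing_face_complex
  by (rule Union_missing_face_complex) (rule KP_missing_face_not_singleton)

lemma KP_memI:
  assumes "partition_on {1..n+1} P" "T \<noteq> {}" "T \<subseteq> KP_vertices n P"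
    and "\<And>B. Inr B \<in> T \<Longrightarrow> \<exists>j\<in>B. Inl j \<notin> T"
  shows "T \<in> KP n P"
  unfolding KP_eq_missing_face_complex[OF assms(1)] missing_face_complex_def KP_missing_faces_def
  using assms(2-4) by fastforce

lemma KP_pair_iff:
  assumes P: "partition_on {1..n+1} P" and "x \<in> KP_vertices n P" "y \<in> KP_vertices n P"
  shows "{x, y} \<in> KP n P \<longleftrightarrow> (\<forall>i. {x, y} \<noteq> {Inl i, Inr {i}})"
proof -
  have "(\<exists>B\<in>P. insert (Inr B) (Inl ` B) \<subseteq> {x, y}) \<longleftrightarrow> (\<exists>i. {x, y} = {Inl i, Inr {i}})"
  proof
    assume "\<exists>B\<in>P. insert (Inr B) (Inl ` B) \<subseteq> {x, y}"
    then obtain B where B: "B \<in> P" "insert (Inr B) (Inl ` B) \<subseteq> {x, y}"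
      by blast
    obtain b where "b \<in> B"
      using partition_onD3[OF P] B(1) by fastforce
    then have "{x, y} = {Inl b, Inr B}"
      using B(2) by auto
    moreover have "B = {b}"
      using B(2) \<open>b \<in> B\<close> \<open>{x, y} = {Inl b, Inr B}\<close> by auto
    ultimately show "\<exists>i. {x, y} = {Inl i, Inr {i}}"
      by blast
  next
    assume "\<exists>i. {x, y} = {Inl i, Inr {i}}"
    then obtain i where i: "{x, y} = {Inl i, Inr {i}}"
      by blast
    then have "{i} \<in> P"
      using assms(2,3) by (auto simp: KP_vertices_def doubleton_eq_iff)
    then show "\<exists>B\<in>P. insert (Inr B) (Inl ` B) \<subseteq> {x, y}"
      using i by auto
  qed
  then show ?thesis
    using assms(2,3)
    by (auto simp: KP_eq_missing_face_complex[OF P] missing_face_complex_def KP_missing_faces_def)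
qed

lemma KP_face_Inl: "partition_on {1..n+1} P \<Longrightarrow> Inl ` {1..n+1} \<in> KP n P"
  by (rule KP_memI) (auto simp: KP_vertices_def)

lemma KP_face_Inr_Inl:
  assumes P: "partition_on {1..n+1} P" and "B \<in> P" "j \<in> B"
  shows "insert (Inr B) (Inl ` ({1..n+1} - {j})) \<in> KP n P"
proof (rule KP_memI[OF P])
  show "insert (Inr B) (Inl ` ({1..n+1} - {j})) \<subseteq> KP_vertices n P"
    using assms(2) by (auto simp: KP_vertices_def)
  fix B'
  assume "Inr B' \<in> insert (Inr B) (Inl ` ({1..n+1} - {j}))"
  then show "\<exists>j'\<in>B'. Inl j' \<notin> insert (Inr B) (Inl ` ({1..n+1} - {j}))"
    using assms(3) by (intro bexI[of _ j]) auto
qed simp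

lemma KP_face_Inr_Inr:
  assumes P: "partition_on {1..n+1} P" and "B \<in> P" "C \<in> P" "j \<in> B" "k \<in> C"
  shows "insert (Inr B) (insert (Inr C) (Inl ` ({1..n+1} - {j, k}))) \<in> KP n P"
proof (rule KP_memI[OF P])
  let ?T = "insert (Inr B) (insert (Inr C) (Inl ` ({1..n+1} - {j, k})))"
  show "?T \<subseteq> KP_vertices n P"
    using assms(2,3) by (auto simp: KP_vertices_def)
  fix D
  assume "Inr D \<in> ?T"
  then consider "D = B" | "D = C"
    by auto
  then show "\<exists>j'\<in>D. Inl j' \<notin> ?T"
  proof cases
    case 1
    then show ?thesis
      using assms(4) by (intro bexI[of _ j]) auto
  next
    case 2
    then show ?thesis
      using assms(5) by (intro bexI[of _ k]) auto
  qed
qed simp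

lemma atLeastAtMost_avoiding:
  fixes n j k :: nat
  assumes "n \<ge> 2"
  shows "\<exists>p\<in>{1..n+1}. p \<noteq> j \<and> p \<noteq> k" and "\<exists>p\<in>{1..n+1}. \<exists>q\<in>{1..n+1}. p \<noteq> q \<and> p \<noteq> j \<and> q \<noteq> j"
proof -
  have "{1, 2, 3} \<subseteq> {1..n+1}"
    using assms by auto
  moreover have "\<exists>p\<in>{1, 2, 3}. p \<noteq> j \<and> p \<noteq> k" "\<exists>p\<in>{1, 2, 3}. \<exists>q\<in>{1, 2, 3}. p \<noteq> q \<and> p \<noteq> j \<and> q \<noteq> j"
    by auto
  ultimately show "\<exists>p\<in>{1..n+1}. p \<noteq> j \<and> p \<noteq> k" "\<exists>p\<in>{1..n+1}. \<exists>q\<in>{1..n+1}. p \<noteq> q \<and> p \<noteq> j \<and> q \<noteq> j"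
    by (meson subsetD)+
qed

locale KP_equilateral_faces =
  fixes n :: nat and P :: "nat set set" and g :: "nat + nat set \<Rightarrow> 'a::metric_space"
  assumes n: "n \<ge> 2" and partition: "partition_on {1..n+1} P"
    and inj: "inj_on g (KP_vertices n P)"
    and faces: "\<And>T. T \<in> KP n P \<Longrightarrow> \<exists>d. equilateral (g ` T) d"
begin

lemma face_edges_equal:
  assumes T: "T \<in> KP n P" and "x \<in> T" "y \<in> T" "x' \<in> T" "y' \<in> T" "x \<noteq> y" "x' \<noteq> y'"
  shows "dist (g x) (g y) = dist (g x') (g y')"
proof -
  have "T \<subseteq> KP_vertices n P"
    using T Union_KP[OF partition] by blast
  then have "g x \<noteq> g y" "g x' \<noteq> g y'"
    using assms(2-7) inj_onD[OF inj] by blast+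
  moreover obtain d where "equilateral (g ` T) d"
    using faces[OF T] by blast
  ultimately show ?thesis
    using assms(2-5) unfolding equilateral_def by auto
qed

lemma dist_Inl_Inl:
  assumes "i \<in> {1..n+1}" "i' \<in> {1..n+1}" "i \<noteq> i'"
  shows "dist (g (Inl i)) (g (Inl i')) = dist (g (Inl 1)) (g (Inl 2))"
  using assms n by (intro face_edges_equal[OF KP_face_Inl[OF partition]]) auto

lemma dist_Inr_Inl:
  assumes B: "B \<in> P" and i: "i \<in> {1..n+1}" and "B \<noteq> {i}"
  shows "dist (g (Inr B)) (g (Inl i)) = dist (g (Inl 1)) (g (Inl 2))"
proof -
  have "B \<noteq> {}"
    using partition_onD3[OF partition] B by blast
  then obtain j where j: "j \<in> B" "j \<noteq> i"
    using \<open>B \<noteq> {i}\<close> by blast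
  obtain p q where pq: "p \<in> {1..n+1}" "q \<in> {1..n+1}" "p \<noteq> q" "p \<noteq> j" "q \<noteq> j"
    using atLeastAtMost_avoiding(2)[OF n, of j] by blast
  have "dist (g (Inr B)) (g (Inl i)) = dist (g (Inl p)) (g (Inl q))"
    by (rule face_edges_equal[OF KP_face_Inr_Inl[OF partition B j(1)]]) (use i j pq in auto)
  also have "\<dots> = dist (g (Inl 1)) (g (Inl 2))"
    by (rule dist_Inl_Inl[OF pq(1-3)])
  finally show ?thesis .
qed

lemma dist_Inr_Inr:
  assumes B: "B \<in> P" and C: "C \<in> P" and "B \<noteq> C"
  shows "dist (g (Inr B)) (g (Inr C)) = dist (g (Inl 1)) (g (Inl 2))"
proof -
  have "B \<noteq> {}" "C \<noteq> {}"
    using partition_onD3[OF partition] B C by blast+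
  then obtain j k where "j \<in> B" "k \<in> C"
    by blast
  obtain p where p: "p \<in> {1..n+1}" "p \<noteq> j" "p \<noteq> k"
    using atLeastAtMost_avoiding(1)[OF n, of j k] by blast
  have "dist (g (Inr B)) (g (Inr C)) = dist (g (Inr B)) (g (Inl p))"
    by (rule face_edges_equal[OF KP_face_Inr_Inr[OF partition B C \<open>j \<in> B\<close> \<open>k \<in> C\<close>]])
      (use \<open>B \<noteq> C\<close> p in auto)
  also have "\<dots> = dist (g (Inl 1)) (g (Inl 2))"
    using dist_Inr_Inl[OF B p(1)] p(2) \<open>j \<in> B\<close> by auto
  finally show ?thesis .
qed

lemma edges_equal_length:
  obtains d where "d > 0" "\<And>x y. {x, y} \<in> KP n P \<Longrightarrow> x \<noteq> y \<Longrightarrow> dist (g x) (g y) = d"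
proof
  let ?U = "{1..n+1}" and ?L = "KP_vertices n P"
  show "dist (g (Inl 1)) (g (Inl 2)) > 0"
    using inj_onD[OF inj, of "Inl 1" "Inl 2"] n by (auto simp: KP_vertices_def)
  fix x y
  assume "{x, y} \<in> KP n P" "x \<noteq> y"
  then have "x \<in> ?L" "y \<in> ?L"
    using Union_KP[OF partition] by blast+
  moreover have no_pair: "\<forall>i. {x, y} \<noteq> {Inl i, Inr {i}}"
    using KP_pair_iff[OF partition \<open>x \<in> ?L\<close> \<open>y \<in> ?L\<close>] \<open>{x, y} \<in> KP n P\<close> by blast
  ultimately consider i i' where "x = Inl i" "y = Inl i'" "i \<in> ?U" "i' \<in> ?U"
    | B i where "x = Inr B" "y = Inl i" "B \<in> P" "i \<in> ?U"
    | B i where "x = Inl i" "y = Inr B" "B \<in> P" "i \<in> ?U"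
    | B C where "x = Inr B" "y = Inr C" "B \<in> P" "C \<in> P"
    unfolding KP_vertices_def by blast
  then show "dist (g x) (g y) = dist (g (Inl 1)) (g (Inl 2))"
  proof cases
    case 1
    then show ?thesis
      using dist_Inl_Inl[of i i'] \<open>x \<noteq> y\<close> by simp
  next
    case 2
    then have "B \<noteq> {i}"
      using no_pair by (auto simp: insert_commute)
    then show ?thesis
      using dist_Inr_Inl 2 by simp
  next
    case 3
    then have "B \<noteq> {i}"
      using no_pair by auto
    then show ?thesis
      using dist_Inr_Inl 3 by (simp add: dist_commute)
  next
    case 4
    then show ?thesis
      using dist_Inr_Inr \<open>x \<noteq> y\<close> by simp
  qed
qed

end

lemma card_Inl_atLeastAtMost: "card (Inl ` {1..n+1} :: (nat + 'b) set) = n + 1"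
  by (simp add: card_image)

locale KP_equal_edges =
  fixes n :: nat and P :: "nat set set" and g :: "nat + nat set \<Rightarrow> 'a::euclidean_space" and d :: real
  assumes DIM: "DIM('a) = n + 1"
    and partition: "partition_on {1..n+1} P"
    and inj: "inj_on g (KP_vertices n P)"
    and edge_length: "\<And>x y. {x, y} \<in> KP n P \<Longrightarrow> x \<noteq> y \<Longrightarrow> dist (g x) (g y) = d"
    and positive: "d > 0"
begin

lemma edge_dist:
  assumes "x \<in> KP_vertices n P" "y \<in> KP_vertices n P" "x \<noteq> y" "\<And>i. {x, y} \<noteq> {Inl i, Inr {i}}"
  shows "dist (g x) (g y) = d"
  using assms KP_pair_iff[OF partition] edge_length by blast

lemma image_dist:
  assumes X: "X \<subseteq> KP_vertices n P" and "x \<in> g ` X" "y \<in> g ` X" "x \<noteq> y"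
    and non_edge: "\<And>i. Inr {i} \<in> X \<Longrightarrow> {x, y} \<noteq> {g (Inl i), g (Inr {i})}"
  shows "dist x y = d"
proof -
  obtain x' y' where x'y': "x' \<in> X" "y' \<in> X" "x = g x'" "y = g y'"
    using assms(2,3) by blast
  have "{x', y'} \<noteq> {Inl i, Inr {i}}" for i
  proof
    assume eq: "{x', y'} = {Inl i, Inr {i}}"
    then have "Inr {i} \<in> {x', y'}"
      by simp
    then have "Inr {i} \<in> X"
      using x'y'(1,2) by auto
    moreover have "{x, y} = {g (Inl i), g (Inr {i})}"
      using eq unfolding x'y'(3,4) by (metis image_empty image_insert)
    ultimately show False
      using non_edge by blast
  qed
  moreover have "x' \<in> KP_vertices n P" "y' \<in> KP_vertices n P" "x' \<noteq> y'"
    using X x'y' \<open>x \<noteq> y\<close> by auto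
  ultimately show ?thesis
    using edge_dist[of x' y'] x'y'(3,4) by simp
qed

lemma equilateral_image:
  assumes "X \<subseteq> KP_vertices n P" "\<And>i. Inr {i} \<notin> X"
  shows "equilateral (g ` X) d"
  unfolding equilateral_def using image_dist[OF assms(1)] assms(2) by blast

lemma card_image_vertices: "X \<subseteq> KP_vertices n P \<Longrightarrow> card (g ` X) = card X"
  using card_image inj_on_subset[OF inj] by blast

lemma no_two_large_blocks:
  assumes "B \<in> P" "C \<in> P" "B \<noteq> C" "card B \<ge> 2" "card C \<ge> 2"
  shows False
proof -
  define X where "X = insert (Inr B) (insert (Inr C) (Inl ` {1..n+1}))"
  have X: "X \<subseteq> KP_vertices n P"
    using assms by (auto simp: X_def KP_vertices_def)
  have "equilateral (g ` X) d"
    using assms(4,5) by (intro equilateral_image[OF X]) (auto simp: X_def)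
  then have "card (g ` X) \<le> n + 2"
    using equilateral_card_le[of "g ` X"] DIM by (simp add: X_def)
  moreover have "card X = n + 3"
    using assms(3) card_Inl_atLeastAtMost by (simp add: X_def card_insert_if image_iff)
  ultimately show False
    using card_image_vertices[OF X] by simp
qed

lemma no_large_block_and_two_singletons:
  assumes "B \<in> P" "card B \<ge> 2" "{a} \<in> P" "{b} \<in> P" "a \<noteq> b"
  shows False
proof -
  have ab: "a \<in> {1..n+1}" "b \<in> {1..n+1}"
    using assms(3,4) partition_onD1[OF partition] by blast+
  have "B \<noteq> {i}" for i
    using assms(2) by auto
  define X where "X = insert (Inr B) (insert (Inr {a}) (insert (Inr {b}) (Inl ` {1..n+1})))"
  have X: "X \<subseteq> KP_vertices n P"
    using assms by (auto simp: X_def KP_vertices_def)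
  have labels: "Inl a \<in> X" "Inr {a} \<in> X" "Inl b \<in> X" "Inr {b} \<in> X"
    using ab by (auto simp: X_def)
  have "set [Inl a, Inr {a}, Inl b, Inr {b}] \<subseteq> KP_vertices n P"
    using X labels by auto
  then have "distinct (map g [Inl a, Inr {a}, Inl b, Inr {b}])"
    unfolding distinct_map using assms(5) by (intro conjI inj_on_subset[OF inj]) simp_all
  then have "distinct [g (Inl a), g (Inr {a}), g (Inl b), g (Inr {b})]"
    by simp
  moreover have singletons: "i = a \<or> i = b" if "Inr {i} \<in> X" for i
    using that \<open>\<And>i. B \<noteq> {i}\<close>[of i] by (auto simp: X_def)
  ultimately have "card (g ` X) \<le> DIM('a) + 2"
  proof (intro two_exceptional_pairs_card_le[of "g ` X" "g (Inl a)" "g (Inr {a})" "g (Inl b)" "g (Inr {b})" d])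
    fix x y
    assume "x \<in> g ` X" "y \<in> g ` X" "x \<noteq> y"
      "{x, y} \<noteq> {g (Inl a), g (Inr {a})}" "{x, y} \<noteq> {g (Inl b), g (Inr {b})}"
    then show "dist x y = d"
      using singletons by (intro image_dist[OF X]) blast+
  qed (use labels positive in \<open>simp_all add: X_def\<close>)
  moreover have "card X = n + 4"
    using assms(5) \<open>\<And>i. B \<noteq> {i}\<close> card_Inl_atLeastAtMost by (simp add: X_def card_insert_if image_iff)
  ultimately show False
    using card_image_vertices[OF X] DIM by simp
qed

end

lemma partition_on_shape:
  assumes P: "partition_on {1..n+1} P"
    and two_large: "\<And>B C. B \<in> P \<Longrightarrow> C \<in> P \<Longrightarrow> B \<noteq> C \<Longrightarrow> card B \<ge> 2 \<Longrightarrow> card C \<ge> 2 \<Longrightarrow> False"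
    and large_two_singletons: "\<And>B a b. B \<in> P \<Longrightarrow> card B \<ge> 2 \<Longrightarrow> {a} \<in> P \<Longrightarrow> {b} \<in> P \<Longrightarrow> a \<noteq> b \<Longrightarrow> False"
  shows "card P = 1 \<or> (\<forall>B\<in>P. card B = 1) \<or> (\<exists>A B. P = {A, B} \<and> card A = 1 \<and> card B = n)"
proof (rule ccontr)
  assume neg: "\<not> ?thesis"
  have card_pos: "card B \<ge> 1" if "B \<in> P" for B
  proof -
    have "finite B" "B \<noteq> {}"
      using that partition_onD1[OF P] partition_onD3[OF P] finite_subset[of B "{1..n+1}"] by blast+
    then show ?thesis
      by (simp add: Suc_le_eq card_gt_0_iff)
  qed
  obtain B where B: "B \<in> P" "card B \<ge> 2"
    using neg card_pos by fastforce
  have "P \<noteq> {B}"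
    using neg by auto
  then obtain C where C: "C \<in> P" "C \<noteq> B"
    using B(1) by blast
  then have "\<not> card C \<ge> 2"
    using two_large[OF B(1) C(1) C(2)[symmetric] B(2)] by blast
  then have "card C = 1"
    using card_pos[OF C(1)] by linarith
  then obtain a where a: "C = {a}"
    by (auto simp: card_1_singleton_iff)
  show False
  proof (cases "P = {B, C}")
    case True
    have "B \<union> C = {1..n+1}" "B \<inter> C = {}"
      using True partition_onD1[OF P] disjointD[OF partition_onD2[OF P] B(1) C(1) C(2)[symmetric]] by auto
    then have "B = {1..n+1} - {a}" "a \<in> {1..n+1}"
      using a by auto
    then have "card B = n"
      by simp
    then show False
      using neg True \<open>card C = 1\<close> by blast
  next
    case False
    then obtain D where D: "D \<in> P" "D \<noteq> B" "D \<noteq> C"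
      using B(1) C(1) by blast
    then have "\<not> card D \<ge> 2"
      using two_large[OF B(1) D(1) D(2)[symmetric] B(2)] by blast
    then have "card D = 1"
      using card_pos[OF D(1)] by linarith
    then obtain b where "D = {b}"
      by (auto simp: card_1_singleton_iff)
    then show False
      using large_two_singletons[OF B, of a b] C(1) D a by blast
  qed
qed

lemma KP_realization_imp_partition_shape:
  fixes Q :: "'a::euclidean_space set"
  assumes n: "n \<ge> 2" and DIM: "DIM('a) = n + 1" and P: "partition_on {1..n+1} P"
    and Q: "polytope Q" "\<forall>F. F facet_of Q \<longrightarrow> regular_simplex F"
    and iso: "simplicial_iso (boundary_complex Q) (KP n P)"
  shows "card P = 1 \<or> (\<forall>B\<in>P. card B = 1) \<or> (\<exists>A B. P = {A, B} \<and> card A = 1 \<and> card B = n)"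
proof -
  obtain g :: "nat + nat set \<Rightarrow> 'a" where "inj_on g (\<Union>(KP n P))" "\<And>T. T \<in> KP n P \<Longrightarrow> \<exists>d. equilateral (g ` T) d"
    using simplicial_iso_boundary_complex_equilateral[OF Q iso] by blast
  then interpret KP_equilateral_faces n P g
    using n P Union_KP[OF P] by unfold_locales auto
  obtain d where "d > 0" "\<And>x y. {x, y} \<in> KP n P \<Longrightarrow> x \<noteq> y \<Longrightarrow> dist (g x) (g y) = d"
    using edges_equal_length by blast
  then interpret KP_equal_edges n P g d
    using DIM P inj by unfold_locales auto
  show ?thesis
    using P no_two_large_blocks no_large_block_and_two_singletons by (rule partition_on_shape)
qed

theorem proposition2p10:
  fixes n :: nat and P :: "nat set set"
  assumes "n \<ge> 2" and "DIM('a::euclidean_space) = n + 1"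
    and "partition_on {1..n+1} P"
  shows "(\<exists>Q :: 'a set. polytope Q \<and> aff_dim Q = int (n + 1)
            \<and> (\<forall>F. F facet_of Q \<longrightarrow> regular_simplex F)
            \<and> simplicial_iso (boundary_complex Q) (KP n P))
         \<longleftrightarrow> (card P = 1
              \<or> (\<forall>B\<in>P. card B = 1)
              \<or> (\<exists>A B. P = {A, B} \<and> card A = 1 \<and> card B = n))"
proof
  assume "\<exists>Q :: 'a set. polytope Q \<and> aff_dim Q = int (n + 1)
            \<and> (\<forall>F. F facet_of Q \<longrightarrow> regular_simplex F)
            \<and> simplicial_iso (boundary_complex Q) (KP n P)"
  then show "card P = 1 \<or> (\<forall>B\<in>P. card B = 1) \<or> (\<exists>A B. P = {A, B} \<and> card A = 1 \<and> card B = n)"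
    using KP_realization_imp_partition_shape[OF assms] by blast
next
  assume "card P = 1 \<or> (\<forall>B\<in>P. card B = 1) \<or> (\<exists>A B. P = {A, B} \<and> card A = 1 \<and> card B = n)"
  then show "\<exists>Q :: 'a set. polytope Q \<and> aff_dim Q = int (n + 1)
            \<and> (\<forall>F. F facet_of Q \<longrightarrow> regular_simplex F)
            \<and> simplicial_iso (boundary_complex Q) (KP n P)"
    using KP_single_block_realizable[OF assms(2,3)] KP_singleton_blocks_realizable[OF assms(2,3)]
      KP_two_blocks_realizable[OF assms(2,3)] by blast
qed

end
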